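(* Let $\mathcal{I}$ be a system of linear inequalities with integer coefficients in variables $x_1,\dots,x_n$ that has no $0$-$1$ solution. Suppose that for some partition of the $n$ variables into two parts, the Karchmer–Wigderson game for $\mathcal{I}$ requires $t$ bits of randomized communication. Then every tree-like Cutting Planes proof of the unsatisfiability of $\mathcal{I}$, even one whose coefficients are of unbounded size, has size $2^{\Omega(t/\log n)}$ (with an absolute constant in the $\Omega(\cdot)$).
   Context: A Cutting Planes (CP) proof that $\mathcal{I}$ has no $0$-$1$ solution is a sequence of linear inequalities with integer coefficients, arranged as a directed acyclic graph, where each line is either an axiom (an inequality of $\mathcal{I}$) or is derived from earlier lines by one of the rules: (addition) from $\vec a_1\cdot\vec x\le c_1$ and $\vec a_2\cdot \vec x\le c_2$ derive $(\vec a_1+\vec a_2)\cdot\vec x\le c_1+c_2$; (scalar multiplication) from $\vec a\cdot\vec x\le c$ derive $d(\vec a\cdot \vec x)\le dc$ for a positive integer $d$ (and with the inequality reversed for a negative integer $d$); (rounded division) from $c(\vec a\cdot\vec x)\le d$ with $c$ a positive integer derive $\vec a\cdot\vec x\le \lfloor d/c\rfloor$; and the last line is an arithmetically false statement such as $1\le 0$. A tree-like CP proof is a CP proof whose underlying graph is a tree (each derived line is used at most once); its size is the number of lines. No bound is imposed on the magnitude of the coefficients. The Karchmer–Wigderson (KW) game for $\mathcal{I}$ with respect to a partition $P_1,P_2$ of the variables is the communication problem in which, for an assignment $\alpha\in\{0,1\}^n$, Alice receives the restriction of $\alpha$ to $P_1$, Bob receives the restriction of $\alpha$ to $P_2$,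 and they must output an inequality of $\mathcal{I}$ falsified by $\alpha$. "Requires $t$ bits of randomized communication" means every public-coin randomized protocol that solves the game with bounded error (correct with high probability on every input) communicates at least $t$ bits. *)

theory Defs
  imports Complex_Main "HOL-Probability.Probability_Mass_Function"
begin

text \<open>An inequality (a, c) stands for  sum_{i < length a} a_i * x_i <= c.
  A system with n variables is a set of such pairs with length a = n.\<close>

type_synonym ineq = "int list \<times> int"

definition lhs_val :: "int list \<Rightarrow> (nat \<Rightarrow> bool) \<Rightarrow> int" where
  "lhs_val a \<alpha> = (\<Sum>i<length a. a ! i * of_bool (\<alpha> i))"

definition sat_ineq :: "(nat \<Rightarrow> bool) \<Rightarrow> ineq \<Rightarrow> bool" where
  "sat_ineq \<alpha> l = (lhs_val (fst l) \<alpha> \<le> snd l)"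

definition wf_system :: "nat \<Rightarrow> ineq set \<Rightarrow> bool" where
  "wf_system n I = (finite I \<and> (\<forall>l\<in>I. length (fst l) = n))"

definition no_01_solution :: "ineq set \<Rightarrow> bool" where
  "no_01_solution I = (\<forall>\<alpha>::nat \<Rightarrow> bool. \<exists>l\<in>I. \<not> sat_ineq \<alpha> l)"

datatype cp_tree =
    CP_Ax ineq
  | CP_Add cp_tree cp_tree
  | CP_Mult int cp_tree
  | CP_Div int cp_tree

inductive cp_derives :: "ineq set \<Rightarrow> cp_tree \<Rightarrow> ineq \<Rightarrow> bool" for I where
  ax: "l \<in> I \<Longrightarrow> cp_derives I (CP_Ax l) l"
| add: "cp_derives I T1 (a1, c1) \<Longrightarrow> cp_derives I T2 (a2, c2) \<Longrightarrow> length a1 = length a2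
        \<Longrightarrow> cp_derives I (CP_Add T1 T2) (map2 (+) a1 a2, c1 + c2)"
| mult: "cp_derives I T (a, c) \<Longrightarrow> d > 0
        \<Longrightarrow> cp_derives I (CP_Mult d T) (map (\<lambda>x. d * x) a, d * c)"
| rdiv: "cp_derives I T (a, c) \<Longrightarrow> e > 0 \<Longrightarrow> (\<forall>x\<in>set a. e dvd x)
        \<Longrightarrow> cp_derives I (CP_Div e T) (map (\<lambda>x. x div e) a, c div e)"

fun cp_size :: "cp_tree \<Rightarrow> nat" where
  "cp_size (CP_Ax l) = 1"
| "cp_size (CP_Add T1 T2) = cp_size T1 + cp_size T2 + 1"
| "cp_size (CP_Mult d T) = cp_size T + 1"
| "cp_size (CP_Div e T) = cp_size T + 1"

definition false_line :: "ineq \<Rightarrow> bool" where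
  "false_line l = ((\<forall>x\<in>set (fst l). x = 0) \<and> snd l < 0)"

definition treelike_cp_refutation :: "ineq set \<Rightarrow> cp_tree \<Rightarrow> bool" where
  "treelike_cp_refutation I T = (\<exists>l. cp_derives I T l \<and> false_line l)"

datatype ('a, 'b, 'o) protocol =
    PLeaf 'o
  | PAlice "'a \<Rightarrow> bool" "('a, 'b, 'o) protocol" "('a, 'b, 'o) protocol"
  | PBob "'b \<Rightarrow> bool" "('a, 'b, 'o) protocol" "('a, 'b, 'o) protocol"

fun prot_run :: "('a, 'b, 'o) protocol \<Rightarrow> 'a \<Rightarrow> 'b \<Rightarrow> 'o" where
  "prot_run (PLeaf r) x y = r"
| "prot_run (PAlice f p q) x y = (if f x then prot_run p x y else prot_run q x y)"
| "prot_run (PBob g p q) x y = (if g y then prot_run p x y else prot_run q x y)"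

fun prot_cost :: "('a, 'b, 'o) protocol \<Rightarrow> nat" where
  "prot_cost (PLeaf r) = 0"
| "prot_cost (PAlice f p q) = Suc (max (prot_cost p) (prot_cost q))"
| "prot_cost (PBob g p q) = Suc (max (prot_cost p) (prot_cost q))"

text \<open>A public-coin randomized protocol is a probability distribution over deterministic
  protocols (the public random string selects the deterministic protocol).\<close>

definition restrict_to :: "nat set \<Rightarrow> (nat \<Rightarrow> bool) \<Rightarrow> (nat \<Rightarrow> bool)" where
  "restrict_to S \<alpha> = (\<lambda>i. if i \<in> S then \<alpha> i else False)"

definition kw_rand_solves ::
  "nat \<Rightarrow> ineq set \<Rightarrow> nat set \<Rightarrow> (nat \<Rightarrow> bool, nat \<Rightarrow> bool, ineq) protocol pmf \<Rightarrow> bool" where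
  "kw_rand_solves n I P1 R =
     (\<forall>\<alpha>::nat \<Rightarrow> bool.
        measure_pmf.prob R
          {p. let l = prot_run p (restrict_to P1 \<alpha>) (restrict_to ({..<n} - P1) \<alpha>)
              in l \<in> I \<and> \<not> sat_ineq \<alpha> l} \<ge> 2/3)"

definition kw_requires_rand_bits :: "nat \<Rightarrow> ineq set \<Rightarrow> nat set \<Rightarrow> nat \<Rightarrow> bool" where
  "kw_requires_rand_bits n I P1 t =
     (\<forall>R k. kw_rand_solves n I P1 R \<longrightarrow> (\<forall>p\<in>set_pmf R. prot_cost p \<le> k) \<longrightarrow> t \<le> k)"

end

theory Submission
  imports Defs "HOL-Library.Discrete_Functions" "HOL-Library.Sublist"
begin

(*
  Following Impagliazzo, Pitassi and Urquhart, a tree-like refutation of size s yields a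
  protocol for the Karchmer-Wigderson game: the players keep a subtree whose root line is
  falsified by their joint assignment, repeatedly pick a line splitting off between a third and
  two thirds of its leaves, and decide whether that line is falsified; after O(log s) rounds a
  single falsified axiom remains. Deciding a line a.x <= c amounts to comparing Alice's partial
  sum with c minus Bob's; ranking both among the at most 2^(n+1) possible values turns this into
  comparing (n+1)-bit strings, which noisy binary search for the first differing bit, driven by
  hashed equality tests, does with error 2^-r using O(log n + r) bits. Taking r = O(log log s)
  the protocol costs O(log s log n) bits, so t <= C log s log n; for s >= 2^n the trivial bound
  t <= n suffices.
*)

section \<open>Probability\<close>

lemma measure_bind_pmf:
  "measure_pmf.prob (bind_pmf M N) X = (\<integral>x. measure_pmf.prob (N x) X \<partial>M)"
proof -
  have "ennreal (measure_pmf.prob (bind_pmf M N) X) = emeasure (bind_pmf M N) X"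
    by (simp add: measure_pmf.emeasure_eq_measure)
  also have "\<dots> = (\<integral>\<^sup>+x. emeasure (N x) X \<partial>M)"
    by simp
  also have "\<dots> = (\<integral>\<^sup>+x. ennreal (measure_pmf.prob (N x) X) \<partial>M)"
    by (simp add: measure_pmf.emeasure_eq_measure)
  also have "\<dots> = ennreal (\<integral>x. measure_pmf.prob (N x) X \<partial>M)"
    by (rule nn_integral_eq_integral) (auto intro!: measure_pmf.integrable_const_bound[where B=1])
  finally show ?thesis by (simp add: integral_nonneg_AE)
qed

lemma measure_bind_pmf_le:
  assumes "\<And>x. measure_pmf.prob (N x) X \<le> (if x \<in> A then a else 0) + b" "a \<ge> 0" "b \<ge> 0"
  shows "measure_pmf.prob (bind_pmf M N) X \<le> measure_pmf.prob M A * a + b"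
proof -
  have "measure_pmf.prob (bind_pmf M N) X \<le> (\<integral>x. indicator A x * a + b \<partial>M)"
    unfolding measure_bind_pmf
  proof (rule integral_mono)
    show "integrable M (\<lambda>x. indicator A x * a + b)"
      by (rule measure_pmf.integrable_const_bound[where B="a+b"]) (auto simp: indicator_def assms)
    show "measure_pmf.prob (N x) X \<le> indicator A x * a + b" for x
      using assms(1)[of x] by (auto simp: indicator_def)
  qed (auto intro!: measure_pmf.integrable_const_bound[where B=1])
  also have "\<dots> = measure_pmf.prob M A * a + b"
  proof -
    have "integrable M (\<lambda>x. indicat_real A x * a)"
      by (rule measure_pmf.integrable_const_bound[where B=a]) (auto simp: indicator_def assms)
    then show ?thesis
      by (simp add: Bochner_Integration.integral_add measure_pmf.prob_space)
  qed
  finally show ?thesis .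
qed

lemma measure_pmf_mono_on_support:
  assumes "\<And>x. x \<in> set_pmf p \<Longrightarrow> x \<in> A \<Longrightarrow> x \<in> B"
  shows "measure_pmf.prob p A \<le> measure_pmf.prob p B"
proof -
  have "measure_pmf.prob p A = measure_pmf.prob p (A \<inter> set_pmf p)"
    by (simp add: measure_Int_set_pmf)
  also have "\<dots> \<le> measure_pmf.prob p B"
    using assms by (intro measure_pmf.finite_measure_mono) auto
  finally show ?thesis .
qed

lemma replicate_pmf_Suc_Cons:
  "replicate_pmf (Suc n) p = bind_pmf p (\<lambda>x. map_pmf (Cons x) (replicate_pmf n p))"
  by (simp add: map_pmf_def)

lemma length_in_replicate_pmf: "xs \<in> set_pmf (replicate_pmf n p) \<Longrightarrow> length xs = n"
  by (simp add: set_replicate_pmf)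

lemma prob_replicate_pmf_all_le:
  assumes "measure_pmf.prob p {x. P x} \<le> q" "q \<ge> 0"
  shows "measure_pmf.prob (replicate_pmf n p) {xs. \<forall>x\<in>set xs. P x} \<le> q ^ n"
proof (induction n)
  case (Suc n)
  have "measure_pmf.prob (replicate_pmf (Suc n) p) {xs. \<forall>x\<in>set xs. P x}
      \<le> measure_pmf.prob p {x. P x} * q ^ n + 0"
    unfolding replicate_pmf_Suc_Cons
    by (rule measure_bind_pmf_le) (use Suc assms in \<open>auto simp: vimage_def\<close>)
  also have "\<dots> \<le> q ^ Suc n" using assms by (simp add: mult_right_mono)
  finally show ?case .
qed simp

fun bad_steps :: "('s \<Rightarrow> 'r \<Rightarrow> 's) \<Rightarrow> ('s \<Rightarrow> 'r \<Rightarrow> bool) \<Rightarrow> 's \<Rightarrow> 'r list \<Rightarrow> nat" where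
  "bad_steps f bad s [] = 0"
| "bad_steps f bad s (r # rs) = of_bool (bad s r) + bad_steps f bad (f s r) rs"

text \<open>Each step draws fresh randomness, so whatever happened before, it is bad with
  probability at most q; b bad steps among n then have probability at most (n choose b) q^b.\<close>
lemma prob_bad_steps_ge:
  assumes bad: "\<And>s. measure_pmf.prob p {r. bad s r} \<le> q" and "q \<ge> 0"
  shows "measure_pmf.prob (replicate_pmf n p) {rs. b \<le> bad_steps f bad s rs} \<le> real (n choose b) * q ^ b"
proof (induction n arbitrary: s b)
  case 0
  then show ?case by (cases b) auto
next
  case (Suc n)
  show ?case
  proof (cases b)
    case (Suc b')
    have "measure_pmf.prob (replicate_pmf (Suc n) p) {rs. b \<le> bad_steps f bad s rs}
        \<le> measure_pmf.prob p {r. bad s r} * (real (n choose b') * q ^ b') + real (n choose b) * q ^ b"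
      unfolding replicate_pmf_Suc_Cons
    proof (rule measure_bind_pmf_le)
      fix r
      have nonneg: "0 \<le> real (n choose b) * q ^ b" using \<open>q \<ge> 0\<close> by simp
      have "measure_pmf.prob (map_pmf (Cons r) (replicate_pmf n p)) {rs. b \<le> bad_steps f bad s rs}
          = measure_pmf.prob (replicate_pmf n p) {rs. b - of_bool (bad s r) \<le> bad_steps f bad (f s r) rs}"
        using Suc by (auto simp: vimage_def)
      then show "measure_pmf.prob (map_pmf (Cons r) (replicate_pmf n p)) {rs. b \<le> bad_steps f bad s rs}
          \<le> (if r \<in> {r. bad s r} then real (n choose b') * q ^ b' else 0) + real (n choose b) * q ^ b"
        using Suc.IH[where s="f s r" and b=b'] Suc.IH[where s="f s r" and b=b] nonneg Suc by auto
    qed (use \<open>q \<ge> 0\<close> in auto)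
    also have "\<dots> \<le> q * (real (n choose b') * q ^ b') + real (n choose b) * q ^ b"
      using bad[of s] \<open>q \<ge> 0\<close> by (intro add_right_mono mult_right_mono) auto
    also have "\<dots> = real (Suc n choose b) * q ^ b"
      using Suc by (simp add: algebra_simps)
    finally show ?thesis .
  qed simp
qed

lemma potential_foldl:
  fixes \<Phi> :: "'s \<Rightarrow> int"
  assumes inv: "\<And>s r. Inv s \<Longrightarrow> Inv (f s r)"
    and good: "\<And>s r. Inv s \<Longrightarrow> \<not> bad s r \<Longrightarrow> \<Phi> (f s r) \<le> \<Phi> s - 1"
    and any: "\<And>s r. Inv s \<Longrightarrow> \<Phi> (f s r) \<le> \<Phi> s + 1"
    and "Inv s"
  shows "Inv (foldl f s rs) \<and> \<Phi> (foldl f s rs) \<le> \<Phi> s - int (length rs) + 2 * int (bad_steps f bad s rs)"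
  using \<open>Inv s\<close>
proof (induction rs arbitrary: s)
  case (Cons r rs)
  have "\<Phi> (f s r) \<le> \<Phi> s - 1 + 2 * of_bool (bad s r)"
    using good[OF Cons.prems, of r] any[OF Cons.prems, of r] by (cases "bad s r") auto
  then show ?case using Cons.IH[OF inv[OF Cons.prems, of r]] by auto
qed simp

lemma invariant_foldl:
  assumes "\<And>s r. Inv s \<Longrightarrow> \<not> bad s r \<Longrightarrow> Inv (f s r)" "Inv s" "bad_steps f bad s rs = 0"
  shows "Inv (foldl f s rs)"
  using assms(2,3) by (induction rs arbitrary: s) (auto simp: assms(1))

section \<open>Two-party protocols\<close>

fun prot_bind :: "('a, 'b, 'o) protocol \<Rightarrow> ('o \<Rightarrow> ('a, 'b, 'p) protocol) \<Rightarrow> ('a, 'b, 'p) protocol" where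
  "prot_bind (PLeaf r) f = f r"
| "prot_bind (PAlice g p q) f = PAlice g (prot_bind p f) (prot_bind q f)"
| "prot_bind (PBob g p q) f = PBob g (prot_bind p f) (prot_bind q f)"

lemma prot_run_bind: "prot_run (prot_bind p f) x y = prot_run (f (prot_run p x y)) x y"
  by (induction p) auto

lemma prot_cost_bind_le:
  assumes "prot_cost p \<le> a" "\<And>z. prot_cost (f z) \<le> k"
  shows "prot_cost (prot_bind p f) \<le> a + k"
proof -
  have "prot_cost (prot_bind p f) \<le> prot_cost p + k"
    using assms(2) by (induction p) (auto simp: max_def)
  then show ?thesis using assms(1) by simp
qed

fun prot_iterate :: "('s \<Rightarrow> 'r \<Rightarrow> ('a, 'b, 's) protocol) \<Rightarrow> 's \<Rightarrow> 'r list \<Rightarrow> ('a, 'b, 's) protocol" where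
  "prot_iterate P s [] = PLeaf s"
| "prot_iterate P s (r # rs) = prot_bind (P s r) (\<lambda>s'. prot_iterate P s' rs)"

lemma prot_run_iterate: "prot_run (prot_iterate P s rs) x y = foldl (\<lambda>s r. prot_run (P s r) x y) s rs"
  by (induction rs arbitrary: s) (auto simp: prot_run_bind)

lemma prot_cost_iterate_le:
  assumes "\<And>s r. prot_cost (P s r) \<le> k"
  shows "prot_cost (prot_iterate P s rs) \<le> length rs * k"
proof (induction rs arbitrary: s)
  case (Cons r rs)
  have "prot_cost (prot_iterate P s (r # rs)) \<le> k + length rs * k"
    by (simp, rule prot_cost_bind_le[OF assms Cons.IH])
  then show ?case by simp
qed simp

fun prot_reveal :: "nat set \<Rightarrow> nat \<Rightarrow> (nat \<Rightarrow> bool) \<Rightarrow> (nat \<Rightarrow> bool, nat \<Rightarrow> bool, nat \<Rightarrow> bool) protocol" where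
  "prot_reveal P1 0 acc = PLeaf acc"
| "prot_reveal P1 (Suc k) acc = (if k \<in> P1
     then PAlice (\<lambda>x. x k) (prot_reveal P1 k (acc(k := True))) (prot_reveal P1 k (acc(k := False)))
     else PBob (\<lambda>y. y k) (prot_reveal P1 k (acc(k := True))) (prot_reveal P1 k (acc(k := False))))"

lemma prot_run_reveal:
  "prot_run (prot_reveal P1 k acc) x y = (\<lambda>i. if i < k then (if i \<in> P1 then x i else y i) else acc i)"
proof (induction k arbitrary: acc)
  case (Suc k)
  have "prot_run (prot_reveal P1 (Suc k) acc) x y
      = prot_run (prot_reveal P1 k (acc(k := if k \<in> P1 then x k else y k))) x y"
    by (cases "k \<in> P1"; cases "x k"; cases "y k") auto
  then show ?case unfolding Suc.IH by (auto simp: fun_eq_iff less_Suc_eq)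
qed simp

lemma prot_cost_reveal: "prot_cost (prot_reveal P1 k acc) \<le> k"
  by (induction k arbitrary: acc) auto

section \<open>Noisy binary search\<close>

abbreviation lcp :: "'a list \<Rightarrow> 'a list \<Rightarrow> nat" where
  "lcp u t \<equiv> length (longest_common_prefix u t)"

lemma lcp_le_length1: "lcp u t \<le> length u"
  using longest_common_prefix_prefix1 prefix_length_le by blast

lemma lcp_le_length2: "lcp u t \<le> length t"
  using longest_common_prefix_prefix2 prefix_length_le by blast

lemma prefix_iff_lcp: "prefix u t \<longleftrightarrow> lcp u t = length u"
  by (induction u t rule: longest_common_prefix.induct) auto

lemma prefix_eq_if_same_length: "prefix u t \<Longrightarrow> length u = length t \<Longrightarrow> u = t"
  by (auto simp: prefix_def)

lemma take_eq_iff_le_lcp: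
  "k \<le> length u \<Longrightarrow> k \<le> length t \<Longrightarrow> take k u = take k t \<longleftrightarrow> k \<le> lcp u t"
proof (induction u t arbitrary: k rule: longest_common_prefix.induct)
  case (1 x xs y ys)
  then show ?case by (cases k) auto
qed auto

lemma lcp_snoc_if_not_prefix: "\<not> prefix u t \<Longrightarrow> lcp (u @ [b]) t = lcp u t"
  by (induction u t rule: longest_common_prefix.induct) auto

lemma lcp_snoc_if_prefix:
  "prefix u t \<Longrightarrow> length u < length t \<Longrightarrow>
   lcp (u @ [b]) t = (if b = t ! length u then Suc (length u) else length u)"
proof (induction u arbitrary: t)
  case Nil
  then show ?case by (cases t) auto
next
  case (Cons x xs)
  then show ?case by (cases t) auto
qed

lemma lcp_butlast_if_not_prefix: "\<not> prefix u t \<Longrightarrow> lcp (butlast u) t = lcp u t"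
proof (induction u arbitrary: t)
  case (Cons x xs)
  then show ?case by (cases t; cases xs) auto
qed simp

lemma prefix_snoc_iff_nth:
  "prefix u t \<Longrightarrow> length u < length t \<Longrightarrow> prefix (u @ [b]) t \<longleftrightarrow> b = t ! length u"
  using lcp_snoc_if_prefix[of u t b] prefix_iff_lcp[of "u @ [b]" t] by auto

lemma prefix_butlast: "prefix u t \<Longrightarrow> prefix (butlast u) t"
  using prefixeq_butlast prefix_order.trans by blast

definition tree_dist :: "'a list \<Rightarrow> 'a list \<Rightarrow> int" where
  "tree_dist u t = int (length u) + int (length t) - 2 * int (lcp u t)"

lemma tree_dist_self [simp]: "tree_dist t t = 0"
  using prefix_iff_lcp[of t t] by (simp add: tree_dist_def)

lemma tree_dist_pos: "u \<noteq> t \<Longrightarrow> length u \<le> length t \<Longrightarrow> tree_dist u t \<ge> 1"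
  using lcp_le_length1[of u t] lcp_le_length2[of u t] prefix_iff_lcp[of u t] prefix_eq_if_same_length[of u t]
  by (force simp: tree_dist_def)

lemma tree_dist_snoc_le: "length u < length t \<Longrightarrow> tree_dist (u @ [b]) t \<le> tree_dist u t + 1"
  using lcp_snoc_if_prefix[of u t b] lcp_snoc_if_not_prefix[of u t b] prefix_iff_lcp[of u t]
  by (cases "prefix u t") (auto simp: tree_dist_def)

lemma tree_dist_snoc_nth: "prefix u t \<Longrightarrow> length u < length t \<Longrightarrow> tree_dist (u @ [t ! length u]) t = tree_dist u t - 1"
  using lcp_snoc_if_prefix[of u t "t ! length u"] prefix_iff_lcp[of u t] by (simp add: tree_dist_def)

lemma tree_dist_butlast_le: "u \<noteq> [] \<Longrightarrow> tree_dist (butlast u) t \<le> tree_dist u t + 1"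
  using lcp_butlast_if_not_prefix[of u t] prefix_butlast[of u t] prefix_iff_lcp[of u t] prefix_iff_lcp[of "butlast u" t]
  by (cases "prefix u t") (auto simp: tree_dist_def)

lemma tree_dist_butlast_not_prefix: "\<not> prefix u t \<Longrightarrow> tree_dist (butlast u) t = tree_dist u t - 1"
  using lcp_butlast_if_not_prefix[of u t] by (cases u) (auto simp: tree_dist_def)

text \<open>Noisy binary search of Feige, Raghavan, Peleg and Upfal for a leaf t of the complete binary
  tree of depth H. The state is a node u together with a counter c, which only grows at leaves.
  Every correct pair of answers lowers the potential (distance to t, or -c at t) by one.\<close>
fun walk_step :: "nat \<Rightarrow> bool list \<times> nat \<Rightarrow> bool \<Rightarrow> bool \<Rightarrow> bool list \<times> nat" where
  "walk_step H (u, c) below b =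
     (if below then (if length u = H then (u, Suc c) else (u @ [b], 0))
      else if c > 0 then (u, c - 1) else (butlast u, 0))"

definition walk_correct :: "bool list \<Rightarrow> bool list \<times> nat \<Rightarrow> bool \<Rightarrow> bool \<Rightarrow> bool" where
  "walk_correct t s below b \<longleftrightarrow>
     below = prefix (fst s) t \<and> (prefix (fst s) t \<and> length (fst s) < length t \<longrightarrow> b = t ! length (fst s))"

fun walk_potential :: "bool list \<Rightarrow> bool list \<times> nat \<Rightarrow> int" where
  "walk_potential t (u, c) = (if u = t then - int c else int c + tree_dist u t)"

definition walk_inv :: "nat \<Rightarrow> bool list \<times> nat \<Rightarrow> bool" where
  "walk_inv H s \<longleftrightarrow> length (fst s) \<le> H \<and> (snd s > 0 \<longrightarrow> length (fst s) = H)"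

lemma walk_step_inv: "walk_inv H s \<Longrightarrow> walk_inv H (walk_step H s below b)"
  by (cases s) (auto simp: walk_inv_def)

lemma walk_potential_descend_correct:
  assumes "prefix u t" "length u < length t"
  shows "walk_potential t (u @ [t ! length u], 0) = walk_potential t (u, 0) - 1"
proof -
  have d: "tree_dist (u @ [t ! length u]) t = tree_dist u t - 1"
    using tree_dist_snoc_nth[OF assms] .
  have "u \<noteq> t" using assms(2) by auto
  moreover have "tree_dist u t = 1" if "u @ [t ! length u] = t"
    using d that by simp
  ultimately show ?thesis using d by auto
qed

lemma walk_step_correct:
  assumes inv: "walk_inv (length t) (u, c)" and corr: "walk_correct t (u, c) below b"
  shows "walk_potential t (walk_step (length t) (u, c) below b) \<le> walk_potential t (u, c) - 1"
proof -
  have below: "below = prefix u t"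
    and b: "prefix u t \<Longrightarrow> length u < length t \<Longrightarrow> b = t ! length u"
    using corr unfolding walk_correct_def by simp_all
  have lu: "length u \<le> length t" and c: "c > 0 \<Longrightarrow> length u = length t"
    using inv unfolding walk_inv_def by simp_all
  consider "prefix u t" "length u = length t" | "prefix u t" "length u < length t" | "\<not> prefix u t"
    using lu by fastforce
  then show ?thesis
  proof cases
    case 1
    then have "u = t" by (rule prefix_eq_if_same_length)
    then show ?thesis using below by simp
  next
    case 2
    then have "c = 0" using c by fastforce
    have "walk_step (length t) (u, c) below b = (u @ [t ! length u], 0)"
      using 2 below b \<open>c = 0\<close> by simp
    then show ?thesis using walk_potential_descend_correct[OF 2] \<open>c = 0\<close> by simp
  next
    case 3
    have "u \<noteq> t" "u \<noteq> []" using 3 by auto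
    moreover have "butlast u \<noteq> t" using lu \<open>u \<noteq> []\<close> by (cases u rule: rev_cases) auto
    ultimately show ?thesis using 3 below tree_dist_butlast_not_prefix[OF 3] by simp
  qed
qed

lemma walk_step_any:
  assumes inv: "walk_inv (length t) (u, c)"
  shows "walk_potential t (walk_step (length t) (u, c) below b) \<le> walk_potential t (u, c) + 1"
proof (cases "below \<and> length u \<noteq> length t")
  case True
  then have "length u < length t" "c = 0" "u \<noteq> t" using inv by (auto simp: walk_inv_def)
  then show ?thesis using True tree_dist_snoc_le[of u t b] tree_dist_pos[of u t] by simp
next
  case not_descend: False
  show ?thesis
  proof (cases "below \<or> c > 0 \<or> u = []")
    case True
    then show ?thesis using not_descend by auto
  next
    case False
    have "length u \<le> length t" using inv by (simp add: walk_inv_def)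
    then have "butlast u \<noteq> t" using False by (cases u rule: rev_cases) auto
    then show ?thesis
      using False tree_dist_butlast_le[of u t] tree_dist_pos[of u t] \<open>length u \<le> length t\<close>
      by (cases "u = t") auto
  qed
qed

lemma walk_potential_pos: "walk_inv (length t) (u, c) \<Longrightarrow> u \<noteq> t \<Longrightarrow> walk_potential t (u, c) \<ge> 1"
  using tree_dist_pos[of u t] by (simp add: walk_inv_def)

lemma walk_reaches_target:
  assumes step: "\<And>s r. \<exists>below b. f s r = walk_step (length t) s below b"
    and few_bad: "length t + 2 * bad_steps f
      (\<lambda>s r. walk_inv (length t) s \<and> walk_potential t s - 1 < walk_potential t (f s r)) ([], 0) rs \<le> length rs"
  shows "fst (foldl f ([], 0) rs) = t"
proof (rule ccontr)
  assume miss: "fst (foldl f ([], 0) rs) \<noteq> t"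
  let ?bad = "\<lambda>s r. walk_inv (length t) s \<and> walk_potential t s - 1 < walk_potential t (f s r)"
  have "walk_inv (length t) (foldl f ([], 0) rs) \<and> walk_potential t (foldl f ([], 0) rs)
      \<le> walk_potential t ([], 0) - int (length rs) + 2 * int (bad_steps f ?bad ([], 0) rs)"
  proof (rule potential_foldl)
    fix s r assume inv: "walk_inv (length t) s"
    obtain below b where f: "f s r = walk_step (length t) s below b" using step by blast
    show "walk_inv (length t) (f s r)" unfolding f using inv by (rule walk_step_inv)
    show "walk_potential t (f s r) \<le> walk_potential t s + 1"
      unfolding f using inv walk_step_any by (cases s) simp
  qed (auto simp: walk_inv_def)
  moreover have "walk_potential t ([], 0) \<le> int (length t)"
    by (simp add: tree_dist_def)
  ultimately have "walk_potential t (foldl f ([], 0) rs) \<le> 0"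
    using few_bad by linarith
  moreover have "walk_potential t (foldl f ([], 0) rs) \<ge> 1"
    using walk_potential_pos[of t "fst (foldl f ([], 0) rs)" "snd (foldl f ([], 0) rs)"] miss
      \<open>walk_inv _ _ \<and> _\<close> by simp
  ultimately show False by simp
qed

section \<open>Randomized comparison of bit strings\<close>

fun bits_of :: "nat \<Rightarrow> nat \<Rightarrow> bool list" where
  "bits_of 0 v = []"
| "bits_of (Suc k) v = bit v k # bits_of k v"

fun nat_of_bits :: "bool list \<Rightarrow> nat" where
  "nat_of_bits [] = 0"
| "nat_of_bits (b # u) = of_bool b * 2 ^ length u + nat_of_bits u"

lemma length_bits_of[simp]: "length (bits_of k v) = k"
  by (induction k) auto

lemma bits_of_take_bit: "j \<le> k \<Longrightarrow> bits_of j (take_bit k v) = bits_of j v"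
  by (induction j) (auto simp: bit_take_bit_iff)

lemma nat_of_bits_less: "nat_of_bits u < 2 ^ length u"
proof (induction u)
  case (Cons b u)
  then show ?case by (cases b) auto
qed simp

lemma nat_of_bits_bits_of: "nat_of_bits (bits_of k v) = take_bit k v"
  by (induction k) (auto simp: take_bit_Suc_from_most)

lemma nat_of_bits_snoc: "nat_of_bits (u @ [b]) = 2 * nat_of_bits u + of_bool b"
  by (induction u) (auto simp: algebra_simps)

definition lex_greater :: "bool list \<Rightarrow> bool list \<Rightarrow> bool" where
  "lex_greater xs ys \<longleftrightarrow> lcp xs ys < length xs \<and> xs ! lcp xs ys"

lemma take_bit_less_iff_lex_greater:
  "take_bit N Y < take_bit N X \<longleftrightarrow> lex_greater (bits_of N X) (bits_of N Y)"
  unfolding lex_greater_def length_bits_of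
proof (induction N)
  case 0
  then show ?case by simp
next
  case (Suc N)
  have x: "take_bit (Suc N) X = 2 ^ N * of_bool (bit X N) + take_bit N X"
    and y: "take_bit (Suc N) Y = 2 ^ N * of_bool (bit Y N) + take_bit N Y"
    by (simp_all add: take_bit_Suc_from_most)
  have bx: "take_bit N X < 2 ^ N" and by': "take_bit N Y < 2 ^ N" by simp_all
  show ?case
  proof (cases "bit X N = bit Y N")
    case True
    then show ?thesis using Suc x y by auto
  next
    case False
    have "take_bit (Suc N) Y < take_bit (Suc N) X \<longleftrightarrow> bit X N"
      using x y bx by' False by (cases "bit X N"; simp; linarith)
    then show ?thesis using False by simp
  qed
qed

lemma prefix_bits_of_iff:
  assumes "length u \<le> H" "L < 2 ^ H"
  shows "prefix u (bits_of H L) \<longleftrightarrow>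
    nat_of_bits u * 2 ^ (H - length u) \<le> L \<and> L < (nat_of_bits u + 1) * 2 ^ (H - length u)"
  using assms
proof (induction u arbitrary: H L)
  case Nil
  then show ?case by (simp add: prefix_def)
next
  case (Cons b u)
  then obtain H' where H: "H = Suc H'" by (cases H) auto
  define l' where "l' = take_bit H' L"
  have l'lt: "l' < 2 ^ H'" by (simp add: l'_def)
  have ldec: "L = 2 ^ H' * of_bool (bit L H') + l'"
    using Cons.prems H by (simp add: l'_def take_bit_Suc_from_most[symmetric] take_bit_nat_eq_self)
  have IH: "prefix u (bits_of H' L) \<longleftrightarrow>
    nat_of_bits u * 2 ^ (H' - length u) \<le> l' \<and> l' < (nat_of_bits u + 1) * 2 ^ (H' - length u)"
    using Cons.IH[of H' l'] Cons.prems H l'lt by (simp add: l'_def bits_of_take_bit)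
  define m where "m = (2::nat) ^ (H' - length u)"
  have lu: "length u \<le> H'" using Cons.prems H by simp
  have pm: "2 ^ length u * m = (2::nat) ^ H'"
    using lu by (simp add: m_def power_add[symmetric])
  have vb: "(nat_of_bits u + 1) * m \<le> 2 ^ H'"
  proof -
    have "nat_of_bits u + 1 \<le> 2 ^ length u" using nat_of_bits_less[of u] by simp
    then have "(nat_of_bits u + 1) * m \<le> 2 ^ length u * m" by (rule mult_le_mono1)
    then show ?thesis using pm by simp
  qed
  have lhs: "prefix (b # u) (bits_of H L) \<longleftrightarrow> b = bit L H' \<and> prefix u (bits_of H' L)"
    by (auto simp: H prefix_def)
  have e1: "nat_of_bits (b # u) * 2 ^ (H - length (b # u)) = 2 ^ H' * of_bool b + nat_of_bits u * m"
    using pm H by (simp add: m_def algebra_simps)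
  have e2: "(nat_of_bits (b # u) + 1) * 2 ^ (H - length (b # u)) = 2 ^ H' * of_bool b + (nat_of_bits u + 1) * m"
    using pm H by (simp add: m_def algebra_simps)
  show ?case
    unfolding lhs IH e1 e2 m_def[symmetric]
    using ldec vb l'lt by (cases b; cases "bit L H'") auto
qed

text \<open>A uniformly random predicate on bit strings of length at most N; fixing it to be false on
  longer strings makes the sample space finite.\<close>
definition short_preds :: "nat \<Rightarrow> (bool list \<Rightarrow> bool) set" where
  "short_preds N = {h. \<forall>x. N < length x \<longrightarrow> \<not> h x}"

definition random_pred :: "nat \<Rightarrow> (bool list \<Rightarrow> bool) pmf" where
  "random_pred N = pmf_of_set (short_preds N)"

lemma finite_short_preds: "finite (short_preds N)"
proof -
  have "short_preds N = (\<lambda>A x. x \<in> A) ` Pow {x :: bool list. length x \<le> N}"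
  proof (intro equalityI subsetI)
    fix h assume "h \<in> short_preds N"
    then show "h \<in> (\<lambda>A x. x \<in> A) ` Pow {x :: bool list. length x \<le> N}"
      by (intro image_eqI[where x="{x. h x}"]) (auto simp: short_preds_def not_less[symmetric])
  qed (auto simp: short_preds_def)
  moreover have "finite {x :: bool list. length x \<le> N}"
    using finite_lists_length_le[of "UNIV :: bool set" N] by simp
  ultimately show ?thesis by simp
qed

lemma short_preds_nonempty: "short_preds N \<noteq> {}"
  by (auto simp: short_preds_def intro!: exI[where x="\<lambda>_. False"])

lemma random_pred_collision:
  assumes "a \<noteq> b" "length a \<le> N" "length b \<le> N"
  shows "measure_pmf.prob (random_pred N) {h. h a = h b} \<le> 1/2"
proof -
  let ?F = "short_preds N" and ?E = "{h. h a = h b}"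
  define flip where "flip h = h(a := \<not> h a)" for h :: "bool list \<Rightarrow> bool"
  have flip_flip: "flip (flip h) = h" for h by (auto simp: flip_def)
  have "bij_betw flip (?F \<inter> ?E) (?F \<inter> - ?E)"
  proof (rule bij_betw_byWitness[where f'=flip])
    show "\<forall>h\<in>?F \<inter> ?E. flip (flip h) = h" "\<forall>h\<in>?F \<inter> - ?E. flip (flip h) = h"
      using flip_flip by auto
    show "flip ` (?F \<inter> ?E) \<subseteq> ?F \<inter> - ?E" "flip ` (?F \<inter> - ?E) \<subseteq> ?F \<inter> ?E"
      using assms by (auto simp: flip_def short_preds_def split: if_splits)
  qed
  then have "card (?F \<inter> ?E) = card (?F \<inter> - ?E)" by (rule bij_betw_same_card)
  moreover have "card (?F \<inter> ?E) + card (?F \<inter> - ?E) = card ?F"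
    using finite_short_preds by (subst card_Un_disjoint[symmetric]) (auto intro: arg_cong[where f=card])
  moreover have "card ?F > 0" using finite_short_preds short_preds_nonempty by (simp add: card_gt_0_iff)
  ultimately show ?thesis
    unfolding random_pred_def using finite_short_preds short_preds_nonempty
    by (simp add: measure_pmf_of_set field_simps)
qed

fun prot_equal :: "(bool list \<Rightarrow> bool) list \<Rightarrow> ('a \<Rightarrow> bool list) \<Rightarrow> ('b \<Rightarrow> bool list) \<Rightarrow> ('a, 'b, bool) protocol" where
  "prot_equal [] fa fb = PLeaf True"
| "prot_equal (h # hs) fa fb = PAlice (\<lambda>x. h (fa x))
     (PBob (\<lambda>y. h (fb y)) (prot_equal hs fa fb) (PLeaf False))
     (PBob (\<lambda>y. h (fb y)) (PLeaf False) (prot_equal hs fa fb))"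

lemma prot_run_equal: "prot_run (prot_equal hs fa fb) x y \<longleftrightarrow> (\<forall>h\<in>set hs. h (fa x) = h (fb y))"
  by (induction hs) auto

lemma prot_cost_equal: "prot_cost (prot_equal hs fa fb) \<le> 2 * length hs"
  by (induction hs) auto

text \<open>Six hash values give error at most 1/64; using only the first six keeps the cost
  bounded whatever list is supplied.\<close>
definition prot_prefix_equal ::
  "nat \<Rightarrow> nat \<Rightarrow> ('a \<Rightarrow> bool list) \<Rightarrow> ('b \<Rightarrow> bool list) \<Rightarrow> (bool list \<Rightarrow> bool) list \<Rightarrow> ('a, 'b, bool) protocol" where
  "prot_prefix_equal N k fa fb hs =
     (if k \<le> N then prot_equal (take 6 hs) (\<lambda>x. take k (fa x)) (\<lambda>y. take k (fb y)) else PLeaf False)"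

lemma prot_cost_prefix_equal: "prot_cost (prot_prefix_equal N k fa fb hs) \<le> 12"
  using prot_cost_equal[of "take 6 hs" "\<lambda>x. take k (fa x)" "\<lambda>y. take k (fb y)"]
  by (auto simp: prot_prefix_equal_def)

lemma prot_prefix_equal_error:
  assumes "length (fa x) = N" "length (fb y) = N"
  shows "measure_pmf.prob (replicate_pmf 6 (random_pred N))
     {hs. prot_run (prot_prefix_equal N k fa fb hs) x y \<noteq> (k \<le> lcp (fa x) (fb y))} \<le> 1/64"
proof (cases "k \<le> lcp (fa x) (fb y)")
  case True
  then have "k \<le> N" using lcp_le_length1[of "fa x" "fb y"] assms by simp
  then have "take k (fa x) = take k (fb y)" using take_eq_iff_le_lcp[of k "fa x" "fb y"] True assms by simp
  then show ?thesis using True \<open>k \<le> N\<close> by (simp add: prot_prefix_equal_def prot_run_equal)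
next
  case False
  show ?thesis
  proof (cases "k \<le> N")
    case True
    then have ne: "take k (fa x) \<noteq> take k (fb y)"
      using take_eq_iff_le_lcp[of k "fa x" "fb y"] False assms by simp
    have "measure_pmf.prob (replicate_pmf 6 (random_pred N))
        {hs. prot_run (prot_prefix_equal N k fa fb hs) x y \<noteq> (k \<le> lcp (fa x) (fb y))}
      \<le> measure_pmf.prob (replicate_pmf 6 (random_pred N)) {hs. \<forall>h\<in>set hs. h (take k (fa x)) = h (take k (fb y))}"
    proof (rule measure_pmf_mono_on_support)
      fix hs assume "hs \<in> set_pmf (replicate_pmf 6 (random_pred N))"
        and wrong: "hs \<in> {hs. prot_run (prot_prefix_equal N k fa fb hs) x y \<noteq> (k \<le> lcp (fa x) (fb y))}"
      then have "take 6 hs = hs" by (simp add: length_in_replicate_pmf)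
      then show "hs \<in> {hs. \<forall>h\<in>set hs. h (take k (fa x)) = h (take k (fb y))}"
        using wrong False True by (simp add: prot_prefix_equal_def prot_run_equal)
    qed
    also have "\<dots> \<le> (1/2) ^ 6"
      by (rule prob_replicate_pmf_all_le, rule random_pred_collision[OF ne]) (use assms in auto)
    finally show ?thesis by (simp add: power_one_over)
  qed (use False in \<open>simp add: prot_prefix_equal_def\<close>)
qed

text \<open>Node u of the complete binary tree of depth H is the ancestor of exactly the leaves
  node_lo H u, ..., node_hi H u - 1 (leaves being read as binary numbers); its right child is the
  ancestor of those from node_mid H u on.\<close>
definition node_lo :: "nat \<Rightarrow> bool list \<Rightarrow> nat" where
  "node_lo H u = nat_of_bits u * 2 ^ (H - length u)"

definition node_hi :: "nat \<Rightarrow> bool list \<Rightarrow> nat" where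
  "node_hi H u = (nat_of_bits u + 1) * 2 ^ (H - length u)"

definition node_mid :: "nat \<Rightarrow> bool list \<Rightarrow> nat" where
  "node_mid H u = (2 * nat_of_bits u + 1) * 2 ^ (H - length u - 1)"

lemma walk_correct_interval:
  assumes "walk_inv H (u, c)" "L < 2 ^ H"
  shows "walk_correct (bits_of H L) (u, c) (node_lo H u \<le> L \<and> \<not> node_hi H u \<le> L) (node_mid H u \<le> L)"
proof -
  have lu: "length u \<le> H" using assms by (simp add: walk_inv_def)
  have below: "prefix u (bits_of H L) \<longleftrightarrow> node_lo H u \<le> L \<and> \<not> node_hi H u \<le> L"
    using prefix_bits_of_iff[OF lu assms(2)] by (auto simp: node_lo_def node_hi_def)
  have child: "bits_of H L ! length u = (node_mid H u \<le> L)"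
    if pu: "prefix u (bits_of H L)" and lt: "length u < H"
  proof -
    have "2 ^ (H - length u) = 2 * (2::nat) ^ (H - length u - 1)"
      using lt by (metis Suc_diff_Suc diff_Suc_1 power_Suc zero_less_diff)
    moreover have "length (u @ [True]) \<le> H" using lt by simp
    ultimately have "prefix (u @ [True]) (bits_of H L) \<longleftrightarrow> node_mid H u \<le> L \<and> L < node_hi H u"
      using prefix_bits_of_iff[OF _ assms(2)]
      by (simp add: nat_of_bits_snoc node_mid_def node_hi_def algebra_simps)
    moreover have "L < node_hi H u" using below pu by simp
    moreover have "prefix (u @ [True]) (bits_of H L) \<longleftrightarrow> True = bits_of H L ! length u"
      using prefix_snoc_iff_nth[OF pu, of True] lt by simp
    ultimately show ?thesis by simp
  qed
  show ?thesis unfolding walk_correct_def fst_conv length_bits_of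
  proof (intro conjI impI)
    show "(node_lo H u \<le> L \<and> \<not> node_hi H u \<le> L) = prefix u (bits_of H L)"
      using below by blast
    show "(node_mid H u \<le> L) = bits_of H L ! length u" if "prefix u (bits_of H L) \<and> length u < H"
      using child that by blast
  qed
qed

text \<open>Randomized comparison of two N-bit strings by noisy binary search for the leaf
  bits_of H L, where L is the length of their longest common prefix; the answer to "L \<ge> k?" is
  obtained by a hashed equality test of the k-prefixes.\<close>
definition prot_walk_step :: "nat \<Rightarrow> nat \<Rightarrow> ('a \<Rightarrow> bool list) \<Rightarrow> ('b \<Rightarrow> bool list) \<Rightarrow>
    bool list \<times> nat \<Rightarrow> (bool list \<Rightarrow> bool) list \<Rightarrow> ('a, 'b, bool list \<times> nat) protocol" where
  "prot_walk_step N H fa fb s hs =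
     prot_bind (prot_prefix_equal N (node_lo H (fst s)) fa fb hs) (\<lambda>e_lo.
     prot_bind (prot_prefix_equal N (node_hi H (fst s)) fa fb hs) (\<lambda>e_hi.
     prot_bind (prot_prefix_equal N (node_mid H (fst s)) fa fb hs) (\<lambda>e_mid.
       PLeaf (walk_step H s (e_lo \<and> \<not> e_hi) e_mid))))"

definition prot_lex_greater :: "nat \<Rightarrow> nat \<Rightarrow> nat \<Rightarrow> ('a \<Rightarrow> bool list) \<Rightarrow> ('b \<Rightarrow> bool list) \<Rightarrow>
    (bool list \<Rightarrow> bool) list list \<Rightarrow> ('a, 'b, bool) protocol" where
  "prot_lex_greater N H T fa fb rss =
     prot_bind (prot_iterate (prot_walk_step N H fa fb) ([], 0) (take T rss)) (\<lambda>s.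
       if nat_of_bits (fst s) < N then PAlice (\<lambda>x. fa x ! nat_of_bits (fst s)) (PLeaf True) (PLeaf False)
       else PLeaf False)"

lemma prot_cost_walk_step: "prot_cost (prot_walk_step N H fa fb s hs) \<le> 36"
proof -
  have "prot_cost (prot_walk_step N H fa fb s hs) \<le> 12 + (12 + (12 + 0))"
    unfolding prot_walk_step_def by (intro prot_cost_bind_le prot_cost_prefix_equal) simp
  then show ?thesis by simp
qed

lemma prot_cost_lex_greater: "prot_cost (prot_lex_greater N H T fa fb rss) \<le> 36 * T + 1"
proof -
  have "prot_cost (prot_lex_greater N H T fa fb rss) \<le> length (take T rss) * 36 + 1"
    unfolding prot_lex_greater_def
    by (intro prot_cost_bind_le prot_cost_iterate_le prot_cost_walk_step) simp
  then show ?thesis by simp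
qed

lemma prot_run_walk_step:
  "prot_run (prot_walk_step N H fa fb s hs) x y =
     walk_step H s
       (prot_run (prot_prefix_equal N (node_lo H (fst s)) fa fb hs) x y
        \<and> \<not> prot_run (prot_prefix_equal N (node_hi H (fst s)) fa fb hs) x y)
       (prot_run (prot_prefix_equal N (node_mid H (fst s)) fa fb hs) x y)"
  by (simp add: prot_walk_step_def prot_run_bind)

lemma walk_step_error:
  assumes len: "length (fa x) = N" "length (fb y) = N" and "N < 2 ^ H"
    and t: "t = bits_of H (lcp (fa x) (fb y))"
  shows "measure_pmf.prob (replicate_pmf 6 (random_pred N)) {hs. walk_inv H s \<and>
      walk_potential t s - 1 < walk_potential t (prot_run (prot_walk_step N H fa fb s hs) x y)} \<le> 3/64"
proof -
  obtain u c where s: "s = (u, c)" by force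
  let ?L = "lcp (fa x) (fb y)" and ?p = "replicate_pmf 6 (random_pred N)"
  define W where "W k = {hs. prot_run (prot_prefix_equal N k fa fb hs) x y \<noteq> (k \<le> ?L)}" for k
  have L: "?L < 2 ^ H" using lcp_le_length1[of "fa x" "fb y"] len \<open>N < 2 ^ H\<close> by simp
  have "{hs. walk_inv H s \<and>
      walk_potential t s - 1 < walk_potential t (prot_run (prot_walk_step N H fa fb s hs) x y)}
    \<subseteq> W (node_lo H u) \<union> W (node_hi H u) \<union> W (node_mid H u)"
  proof (intro subsetI, rule ccontr)
    fix hs
    assume bad: "hs \<in> {hs. walk_inv H s \<and>
      walk_potential t s - 1 < walk_potential t (prot_run (prot_walk_step N H fa fb s hs) x y)}"
      and "hs \<notin> W (node_lo H u) \<union> W (node_hi H u) \<union> W (node_mid H u)"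
    then have run: "prot_run (prot_walk_step N H fa fb s hs) x y
        = walk_step (length t) (u, c) (node_lo H u \<le> ?L \<and> \<not> node_hi H u \<le> ?L) (node_mid H u \<le> ?L)"
      by (simp add: W_def s t prot_run_walk_step del: walk_step.simps)
    have inv: "walk_inv (length t) (u, c)" using bad by (simp add: s t)
    have "walk_correct t (u, c) (node_lo H u \<le> ?L \<and> \<not> node_hi H u \<le> ?L) (node_mid H u \<le> ?L)"
      using walk_correct_interval[OF _ L] bad by (simp add: s t)
    with walk_step_correct[OF inv] have "walk_potential t (prot_run (prot_walk_step N H fa fb s hs) x y)
        \<le> walk_potential t s - 1"
      unfolding run by (simp only: s)
    with bad show False by simp
  qed
  then have "measure_pmf.prob ?p {hs. walk_inv H s \<and>
      walk_potential t s - 1 < walk_potential t (prot_run (prot_walk_step N H fa fb s hs) x y)}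
    \<le> measure_pmf.prob ?p (W (node_lo H u) \<union> W (node_hi H u) \<union> W (node_mid H u))"
    by (rule measure_pmf.finite_measure_mono) simp
  also have "\<dots> \<le> measure_pmf.prob ?p (W (node_lo H u) \<union> W (node_hi H u)) + measure_pmf.prob ?p (W (node_mid H u))"
    by (rule measure_Un_le) simp_all
  also have "\<dots> \<le> measure_pmf.prob ?p (W (node_lo H u)) + measure_pmf.prob ?p (W (node_hi H u))
      + measure_pmf.prob ?p (W (node_mid H u))"
    using measure_Un_le[of "W (node_lo H u)" ?p "W (node_hi H u)"] by simp
  also have "\<dots> \<le> 1/64 + 1/64 + 1/64"
    unfolding W_def by (intro add_mono prot_prefix_equal_error len)
  finally show ?thesis by simp
qed

lemma binomial_tail_bound:
  "real ((3 * H + 3 * r) choose (H + r + 1)) * (3/64) ^ (H + r + 1) \<le> (1/2::real) ^ r"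
proof -
  have "real ((3 * H + 3 * r) choose (H + r + 1)) * (3/64) ^ (H + r + 1)
      \<le> 2 ^ (3 * H + 3 * r) * (1/16) ^ (H + r + 1)"
  proof (rule mult_mono)
    show "real ((3 * H + 3 * r) choose (H + r + 1)) \<le> 2 ^ (3 * H + 3 * r)"
      using binomial_le_pow2 by (metis of_nat_le_iff of_nat_numeral of_nat_power)
    show "(3/64::real) ^ (H + r + 1) \<le> (1/16) ^ (H + r + 1)"
      by (rule power_mono) auto
  qed auto
  also have "\<dots> = (1/2) ^ (H + r + 4)"
  proof -
    have "(1/2::real) ^ (4 * (H + r + 1)) = ((1/2) ^ 4) ^ (H + r + 1)"
      by (rule power_mult)
    moreover have "(1/2::real) ^ 4 = 1/16" by (simp add: power_divide)
    ultimately have "(1/16::real) ^ (H + r + 1) = (1/2) ^ (4 * (H + r + 1))"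
      by simp
    also have "\<dots> = (1/2) ^ (3 * H + 3 * r) * (1/2) ^ (H + r + 4)"
    proof -
      have "4 * (H + r + 1) = (3 * H + 3 * r) + (H + r + 4)" by simp
      then show ?thesis by (simp only: power_add)
    qed
    finally show ?thesis by (simp add: power_one_over)
  qed
  also have "\<dots> \<le> (1/2) ^ r" by (rule power_decreasing) auto
  finally show ?thesis .
qed

lemma prot_lex_greater_error:
  assumes len: "length (fa x) = N" "length (fb y) = N" and "N < 2 ^ H"
  shows "measure_pmf.prob (replicate_pmf (3 * H + 3 * r) (replicate_pmf 6 (random_pred N)))
    {rss. prot_run (prot_lex_greater N H (3 * H + 3 * r) fa fb rss) x y \<noteq> lex_greater (fa x) (fb y)}
    \<le> (1/2) ^ r"
proof -
  let ?L = "lcp (fa x) (fb y)" and ?T = "3 * H + 3 * r"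
  define t where "t = bits_of H ?L"
  define f where "f = (\<lambda>s hs. prot_run (prot_walk_step N H fa fb s hs) x y)"
  define bad where "bad s hs \<longleftrightarrow> walk_inv (length t) s \<and> walk_potential t s - 1 < walk_potential t (f s hs)"
    for s hs
  have lt: "length t = H" by (simp add: t_def)
  have L: "?L < 2 ^ H" using lcp_le_length1[of "fa x" "fb y"] len \<open>N < 2 ^ H\<close> by simp
  have correct: "prot_run (prot_lex_greater N H ?T fa fb rss) x y = lex_greater (fa x) (fb y)"
    if "length rss = ?T" "bad_steps f bad ([], 0) rss \<le> H + r" for rss
  proof -
    have "fst (foldl f ([], 0) rss) = t"
    proof (rule walk_reaches_target)
      show "\<exists>below b. f s hs = walk_step (length t) s below b" for s hs
        by (auto simp: f_def lt prot_run_walk_step)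
      show "length t + 2 * bad_steps f (\<lambda>s r. walk_inv (length t) s \<and>
          walk_potential t s - 1 < walk_potential t (f s r)) ([], 0) rss \<le> length rss"
        using that by (simp add: lt bad_def[abs_def])
    qed
    moreover have "nat_of_bits t = ?L" using L by (simp add: t_def nat_of_bits_bits_of take_bit_nat_eq_self)
    ultimately show ?thesis
      using that len by (simp add: prot_lex_greater_def prot_run_bind prot_run_iterate f_def[symmetric]
          lex_greater_def)
  qed
  have "measure_pmf.prob (replicate_pmf ?T (replicate_pmf 6 (random_pred N)))
      {rss. prot_run (prot_lex_greater N H ?T fa fb rss) x y \<noteq> lex_greater (fa x) (fb y)}
    \<le> measure_pmf.prob (replicate_pmf ?T (replicate_pmf 6 (random_pred N)))
      {rss. H + r + 1 \<le> bad_steps f bad ([], 0) rss}"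
    by (rule measure_pmf_mono_on_support) (use correct in \<open>force dest: length_in_replicate_pmf\<close>)
  also have "\<dots> \<le> real (?T choose (H + r + 1)) * (3/64) ^ (H + r + 1)"
  proof (rule prob_bad_steps_ge)
    show "measure_pmf.prob (replicate_pmf 6 (random_pred N)) {hs. bad s hs} \<le> 3/64" for s
      using walk_step_error[where fa=fa and fb=fb and x=x and y=y, OF len \<open>N < 2 ^ H\<close> t_def] by (simp add: bad_def f_def lt)
  qed simp
  also have "\<dots> \<le> (1/2) ^ r" by (rule binomial_tail_bound)
  finally show ?thesis .
qed

section \<open>Tree-like Cutting Planes derivations\<close>

lemma lhs_val_add:
  assumes "length a1 = length a2"
  shows "lhs_val (map2 (+) a1 a2) \<alpha> = lhs_val a1 \<alpha> + lhs_val a2 \<alpha>"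
proof -
  have "lhs_val (map2 (+) a1 a2) \<alpha> = (\<Sum>i<length a1. a1 ! i * of_bool (\<alpha> i) + a2 ! i * of_bool (\<alpha> i))"
    unfolding lhs_val_def using assms by (intro sum.cong) (auto simp: algebra_simps)
  then show ?thesis unfolding lhs_val_def sum.distrib using assms by simp
qed

lemma lhs_val_mult: "lhs_val (map (\<lambda>x. d * x) a) \<alpha> = d * lhs_val a \<alpha>"
  unfolding lhs_val_def sum_distrib_left by (intro sum.cong) (auto simp: algebra_simps)

lemma lhs_val_div: "(\<forall>x\<in>set a. e dvd x) \<Longrightarrow> e * lhs_val (map (\<lambda>x. x div e) a) \<alpha> = lhs_val a \<alpha>"
  unfolding lhs_val_def sum_distrib_left by (rule sum.cong) auto

lemma lhs_val_cong: "(\<And>i. i < length a \<Longrightarrow> \<alpha> i = \<beta> i) \<Longrightarrow> lhs_val a \<alpha> = lhs_val a \<beta>"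
  unfolding lhs_val_def by (rule sum.cong) auto

lemma sat_ineq_add:
  "length a1 = length a2 \<Longrightarrow> sat_ineq \<alpha> (a1, c1) \<Longrightarrow> sat_ineq \<alpha> (a2, c2)
    \<Longrightarrow> sat_ineq \<alpha> (map2 (+) a1 a2, c1 + c2)"
  by (simp add: sat_ineq_def lhs_val_add)

lemma sat_ineq_mult: "d > 0 \<Longrightarrow> sat_ineq \<alpha> (a, c) \<Longrightarrow> sat_ineq \<alpha> (map (\<lambda>x. d * x) a, d * c)"
  by (simp add: sat_ineq_def lhs_val_mult)

lemma sat_ineq_div:
  assumes "e > 0" "\<forall>x\<in>set a. e dvd x" "sat_ineq \<alpha> (a, c)"
  shows "sat_ineq \<alpha> (map (\<lambda>x. x div e) a, c div e)"
proof -
  have "e * lhs_val (map (\<lambda>x. x div e) a) \<alpha> \<le> c"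
    using assms lhs_val_div[of a e \<alpha>] by (simp add: sat_ineq_def)
  then have "(e * lhs_val (map (\<lambda>x. x div e) a) \<alpha>) div e \<le> c div e"
    by (rule zdiv_mono1) (use assms in simp)
  then show ?thesis using assms(1) by (simp add: sat_ineq_def)
qed

lemma false_line_not_sat: "false_line l \<Longrightarrow> \<not> sat_ineq \<alpha> l"
proof -
  assume l: "false_line l"
  then have "lhs_val (fst l) \<alpha> = 0"
    unfolding lhs_val_def by (intro sum.neutral) (auto simp: false_line_def)
  then show ?thesis using l by (simp add: sat_ineq_def false_line_def)
qed

fun cp_root :: "cp_tree \<Rightarrow> ineq" where
  "cp_root (CP_Ax l) = l"
| "cp_root (CP_Add T1 T2) = (map2 (+) (fst (cp_root T1)) (fst (cp_root T2)), snd (cp_root T1) + snd (cp_root T2))"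
| "cp_root (CP_Mult d T) = (map (\<lambda>x. d * x) (fst (cp_root T)), d * snd (cp_root T))"
| "cp_root (CP_Div e T) = (map (\<lambda>x. x div e) (fst (cp_root T)), snd (cp_root T) div e)"

lemma cp_derives_root: "cp_derives I T l \<Longrightarrow> cp_root T = l"
  by (induction rule: cp_derives.induct) auto

text \<open>A tree-like derivation with every line stored at its node, in which some subderivations
  may have been cut out (leaving a hole).\<close>
datatype ptree = PAx ineq | PHole | PUn ineq ptree | PBin ineq ptree ptree

fun ptree_of :: "cp_tree \<Rightarrow> ptree" where
  "ptree_of (CP_Ax l) = PAx l"
| "ptree_of (CP_Add T1 T2) = PBin (cp_root (CP_Add T1 T2)) (ptree_of T1) (ptree_of T2)"
| "ptree_of (CP_Mult d T) = PUn (cp_root (CP_Mult d T)) (ptree_of T)"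
| "ptree_of (CP_Div e T) = PUn (cp_root (CP_Div e T)) (ptree_of T)"

fun leaves :: "ptree \<Rightarrow> nat" where
  "leaves (PAx l) = 1"
| "leaves PHole = 0"
| "leaves (PUn l t) = leaves t"
| "leaves (PBin l a b) = leaves a + leaves b"

fun root_line :: "ptree \<Rightarrow> ineq" where
  "root_line (PAx l) = l"
| "root_line PHole = ([], 0)"
| "root_line (PUn l t) = l"
| "root_line (PBin l a b) = l"

definition root_false :: "(nat \<Rightarrow> bool) \<Rightarrow> ptree \<Rightarrow> bool" where
  "root_false \<alpha> S \<longleftrightarrow> S \<noteq> PHole \<and> \<not> sat_ineq \<alpha> (root_line S)"

text \<open>Local soundness under the assignment: a line falsified by it has a falsified premise.\<close>
fun sound :: "nat \<Rightarrow> ineq set \<Rightarrow> (nat \<Rightarrow> bool) \<Rightarrow> ptree \<Rightarrow> bool" where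
  "sound n I \<alpha> (PAx l) \<longleftrightarrow> l \<in> I \<and> length (fst l) = n"
| "sound n I \<alpha> PHole \<longleftrightarrow> True"
| "sound n I \<alpha> (PUn l t) \<longleftrightarrow> length (fst l) = n \<and> sound n I \<alpha> t \<and> (\<not> sat_ineq \<alpha> l \<longrightarrow> root_false \<alpha> t)"
| "sound n I \<alpha> (PBin l a b) \<longleftrightarrow> length (fst l) = n \<and> sound n I \<alpha> a \<and> sound n I \<alpha> b
     \<and> (\<not> sat_ineq \<alpha> l \<longrightarrow> root_false \<alpha> a \<or> root_false \<alpha> b)"

fun leaf_axiom :: "ptree \<Rightarrow> ineq" where
  "leaf_axiom (PAx l) = l"
| "leaf_axiom PHole = ([], 0)"
| "leaf_axiom (PUn l t) = leaf_axiom t"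
| "leaf_axiom (PBin l a b) = (if leaves a \<noteq> 0 then leaf_axiom a else leaf_axiom b)"

lemma root_line_ptree_of: "root_line (ptree_of T) = cp_root T"
  by (cases T) auto

lemma ptree_of_not_hole: "ptree_of T \<noteq> PHole"
  by (cases T) auto

lemma leaves_ptree_of: "leaves (ptree_of T) \<le> cp_size T"
  by (induction T) auto

lemma sound_ptree_of:
  assumes "cp_derives I T l" "wf_system n I"
  shows "sound n I \<alpha> (ptree_of T) \<and> length (fst l) = n"
  using assms(1)
proof (induction rule: cp_derives.induct)
  case (ax l)
  then show ?case using assms(2) by (auto simp: wf_system_def)
next
  case (add T1 a1 c1 T2 a2 c2)
  then show ?case
    using sat_ineq_add[of a1 a2 \<alpha> c1 c2] ptree_of_not_hole
    by (auto simp: root_false_def root_line_ptree_of cp_derives_root)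
next
  case (mult T a c d)
  then show ?case
    using sat_ineq_mult[of d \<alpha> a c] ptree_of_not_hole
    by (auto simp: root_false_def root_line_ptree_of cp_derives_root)
next
  case (rdiv T a c e)
  then show ?case
    using sat_ineq_div[of e a \<alpha> c] ptree_of_not_hole
    by (auto simp: root_false_def root_line_ptree_of cp_derives_root)
qed

lemma root_false_leaves: "sound n I \<alpha> S \<Longrightarrow> root_false \<alpha> S \<Longrightarrow> leaves S \<ge> 1"
  by (induction S) (auto simp: root_false_def)

lemma sound_root_line_length: "sound n I \<alpha> S \<Longrightarrow> S \<noteq> PHole \<Longrightarrow> length (fst (root_line S)) = n"
  by (cases S) auto

lemma leaf_axiom_falsified:
  "sound n I \<alpha> S \<Longrightarrow> root_false \<alpha> S \<Longrightarrow> leaves S \<le> 1 \<Longrightarrow> leaf_axiom S \<in> I \<and> \<not> sat_ineq \<alpha> (leaf_axiom S)"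
proof (induction S)
  case (PBin l a b)
  then have "root_false \<alpha> a \<or> root_false \<alpha> b" by (simp add: root_false_def)
  then show ?case
  proof
    assume "root_false \<alpha> a"
    then show ?thesis using root_false_leaves[of n I \<alpha> a] PBin by auto
  next
    assume "root_false \<alpha> b"
    then have "leaves a = 0" using root_false_leaves[of n I \<alpha> b] PBin.prems by simp
    then show ?thesis using PBin \<open>root_false \<alpha> b\<close> by auto
  qed
qed (auto simp: root_false_def)

text \<open>Descend towards the heavier child until the subtree carries at most two thirds of the m
  leaves (it then carries more than a third), and cut it out, leaving a hole.\<close>
fun split_off :: "nat \<Rightarrow> ptree \<Rightarrow> ptree \<times> ptree" where
  "split_off m (PUn l t) = (let (c, t') = split_off m t in (c, PUn l t'))"
| "split_off m (PBin l a b) =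
    (if leaves b \<le> leaves a then
       (if 3 * leaves a \<le> 2 * m then (a, PBin l PHole b) else (let (c, a') = split_off m a in (c, PBin l a' b)))
     else
       (if 3 * leaves b \<le> 2 * m then (b, PBin l a PHole) else (let (c, b') = split_off m b in (c, PBin l a b'))))"
| "split_off m S = (S, PHole)"

lemma split_off_props:
  assumes "3 * leaves S > 2 * m" "m \<ge> 2" "split_off m S = (c, S')"
  shows "3 * leaves c > m \<and> 3 * leaves c \<le> 2 * m \<and> leaves S' + leaves c = leaves S
    \<and> (sound n I \<alpha> S \<longrightarrow> sound n I \<alpha> c)
    \<and> (sound n I \<alpha> S \<and> \<not> root_false \<alpha> c \<longrightarrow> sound n I \<alpha> S' \<and> root_false \<alpha> S' = root_false \<alpha> S)"
  using assms
proof (induction m S arbitrary: c S' rule: split_off.induct)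
  case (1 m l t)
  obtain c0 t0 where sp: "split_off m t = (c0, t0)" by force
  then show ?case using 1 by (auto simp: root_false_def)
next
  case (2 m l a b)
  show ?case
  proof (cases "leaves b \<le> leaves a")
    case True
    show ?thesis
    proof (cases "3 * leaves a \<le> 2 * m")
      case T2: True
      then show ?thesis using 2(3-) True by (auto simp: root_false_def)
    next
      case F2: False
      obtain c0 a0 where sp: "split_off m a = (c0, a0)" by force
      show ?thesis using 2(3-) True F2 sp 2(1)[OF True F2] by (auto simp: root_false_def)
    qed
  next
    case False
    show ?thesis
    proof (cases "3 * leaves b \<le> 2 * m")
      case T2: True
      then show ?thesis using 2(3-) False by (auto simp: root_false_def)
    next
      case F2: False
      obtain c0 b0 where sp: "split_off m b = (c0, b0)" by force
      show ?thesis using 2(3-) False F2 sp 2(2)[OF False F2] by (auto simp: root_false_def)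
    qed
  qed
qed auto

section \<open>A protocol for the Karchmer--Wigderson game\<close>

definition support_below :: "nat \<Rightarrow> (nat \<Rightarrow> bool) set" where
  "support_below n = {z. \<forall>i. z i \<longrightarrow> i < n}"

lemma support_below_eq: "support_below n = (\<lambda>A i. i \<in> A) ` Pow {..<n}"
proof (intro equalityI subsetI)
  fix z assume "z \<in> support_below n"
  then show "z \<in> (\<lambda>A i. i \<in> A) ` Pow {..<n}"
    by (intro image_eqI[where x="{i. z i}"]) (auto simp: support_below_def)
qed (auto simp: support_below_def)

lemma finite_support_below: "finite (support_below n)"
  by (simp add: support_below_eq)

lemma card_support_below: "card (support_below n) \<le> 2 ^ n"
proof -
  have "card (support_below n) \<le> card (Pow {..<n::nat})"
    unfolding support_below_eq by (rule card_image_le) simp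
  then show ?thesis by (simp add: card_Pow)
qed

definition alice_sum :: "nat set \<Rightarrow> int list \<Rightarrow> (nat \<Rightarrow> bool) \<Rightarrow> int" where
  "alice_sum P1 a x = (\<Sum>i<length a. a ! i * of_bool (i \<in> P1 \<and> x i))"

definition bob_sum :: "nat set \<Rightarrow> int list \<Rightarrow> (nat \<Rightarrow> bool) \<Rightarrow> int" where
  "bob_sum P1 a y = (\<Sum>i<length a. a ! i * of_bool (i \<notin> P1 \<and> y i))"

text \<open>The line (a, c) is falsified iff Alice's part of the sum exceeds c minus Bob's part. The
  coefficients are unbounded, so instead of these integers the players compare their ranks among
  the at most 2^(n+1) values that either of them could hold, written with n + 1 bits.\<close>
definition line_values :: "nat \<Rightarrow> nat set \<Rightarrow> ineq \<Rightarrow> int set" where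
  "line_values n P1 l = alice_sum P1 (fst l) ` support_below n \<union> (\<lambda>y. snd l - bob_sum P1 (fst l) y) ` support_below n"

definition value_rank :: "int set \<Rightarrow> int \<Rightarrow> nat" where
  "value_rank V v = card {u\<in>V. u < v}"

definition alice_key :: "nat \<Rightarrow> nat set \<Rightarrow> ineq \<Rightarrow> (nat \<Rightarrow> bool) \<Rightarrow> bool list" where
  "alice_key n P1 l x = bits_of (Suc n) (value_rank (line_values n P1 l) (alice_sum P1 (fst l) x))"

definition bob_key :: "nat \<Rightarrow> nat set \<Rightarrow> ineq \<Rightarrow> (nat \<Rightarrow> bool) \<Rightarrow> bool list" where
  "bob_key n P1 l y = bits_of (Suc n) (value_rank (line_values n P1 l) (snd l - bob_sum P1 (fst l) y))"

lemma card_line_values: "card (line_values n P1 l) \<le> 2 ^ Suc n"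
proof -
  have "card (line_values n P1 l) \<le> card (support_below n) + card (support_below n)"
    unfolding line_values_def by (intro card_Un_le[THEN order_trans] add_mono card_image_le finite_support_below)
  then show ?thesis using card_support_below[of n] by simp
qed

lemma value_rank_less_card: "finite V \<Longrightarrow> v \<in> V \<Longrightarrow> value_rank V v < card V"
  unfolding value_rank_def by (rule psubset_card_mono) auto

lemma value_rank_less_iff:
  assumes "finite V" "u \<in> V" "v \<in> V"
  shows "value_rank V u < value_rank V v \<longleftrightarrow> u < v"
proof
  assume "u < v"
  then show "value_rank V u < value_rank V v" unfolding value_rank_def
    using assms by (intro psubset_card_mono) auto
next
  assume "value_rank V u < value_rank V v"
  moreover have "\<not> u < v \<Longrightarrow> value_rank V v \<le> value_rank V u"
    unfolding value_rank_def using assms by (intro card_mono) auto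
  ultimately show "u < v" by linarith
qed

lemma not_sat_iff_lex_greater_keys:
  assumes P1: "P1 \<subseteq> {..<n}" and len: "length (fst l) = n"
  shows "\<not> sat_ineq \<alpha> l \<longleftrightarrow>
    lex_greater (alice_key n P1 l (restrict_to P1 \<alpha>)) (bob_key n P1 l (restrict_to ({..<n} - P1) \<alpha>))"
proof -
  obtain a c where l: "l = (a, c)" by force
  define x where "x = restrict_to P1 \<alpha>"
  define y where "y = restrict_to ({..<n} - P1) \<alpha>"
  define V where "V = line_values n P1 l"
  have "x \<in> support_below n" "y \<in> support_below n"
    using P1 by (auto simp: x_def y_def support_below_def restrict_to_def)
  then have u: "alice_sum P1 a x \<in> V" and v: "c - bob_sum P1 a y \<in> V"
    by (auto simp: V_def line_values_def l)
  have fin: "finite V" by (simp add: V_def line_values_def finite_support_below)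
  have "lhs_val a \<alpha> = alice_sum P1 a x + bob_sum P1 a y"
    unfolding lhs_val_def alice_sum_def bob_sum_def sum.distrib[symmetric]
    by (rule sum.cong) (use len in \<open>auto simp: l x_def y_def restrict_to_def\<close>)
  then have "\<not> sat_ineq \<alpha> l \<longleftrightarrow> value_rank V (c - bob_sum P1 a y) < value_rank V (alice_sum P1 a x)"
    using value_rank_less_iff[OF fin v u] by (auto simp: sat_ineq_def l)
  also have "\<dots> \<longleftrightarrow> lex_greater (alice_key n P1 l x) (bob_key n P1 l y)"
  proof -
    have small: "value_rank V v < 2 ^ Suc n" if "v \<in> V" for v
      using value_rank_less_card[OF fin that] card_line_values[of n P1 l] by (simp add: V_def)
    have "value_rank V (c - bob_sum P1 a y) < value_rank V (alice_sum P1 a x) \<longleftrightarrow>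
        take_bit (Suc n) (value_rank V (c - bob_sum P1 a y)) < take_bit (Suc n) (value_rank V (alice_sum P1 a x))"
      using small[OF u] small[OF v] by (simp only: take_bit_nat_eq_self)
    then show ?thesis
      unfolding take_bit_less_iff_lex_greater alice_key_def bob_key_def V_def l fst_conv snd_conv .
  qed
  finally show ?thesis by (simp add: x_def y_def)
qed

abbreviation balanced_cut :: "ptree \<Rightarrow> ptree \<times> ptree" where
  "balanced_cut S \<equiv> split_off (leaves S) S"

definition search_step :: "(ineq \<Rightarrow> bool) \<Rightarrow> ptree \<Rightarrow> ptree" where
  "search_step falsified S =
     (if leaves S \<le> 1 then S
      else if falsified (root_line (fst (balanced_cut S))) then fst (balanced_cut S) else snd (balanced_cut S))"

lemma balanced_cut_props:
  assumes "leaves S \<ge> 2"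
  shows "3 * leaves (fst (balanced_cut S)) > leaves S" "3 * leaves (fst (balanced_cut S)) \<le> 2 * leaves S"
    "leaves (snd (balanced_cut S)) + leaves (fst (balanced_cut S)) = leaves S"
    "sound n I \<alpha> S \<Longrightarrow> sound n I \<alpha> (fst (balanced_cut S))"
    "sound n I \<alpha> S \<Longrightarrow> \<not> root_false \<alpha> (fst (balanced_cut S)) \<Longrightarrow>
       sound n I \<alpha> (snd (balanced_cut S)) \<and> root_false \<alpha> (snd (balanced_cut S)) = root_false \<alpha> S"
  using split_off_props[of "leaves S" S "fst (balanced_cut S)" "snd (balanced_cut S)" n I \<alpha>] assms by auto

lemma search_step_sound:
  assumes "sound n I \<alpha> S" "root_false \<alpha> S"
    and answer: "leaves S \<ge> 2 \<Longrightarrow> falsified (root_line (fst (balanced_cut S))) \<longleftrightarrow> \<not> sat_ineq \<alpha> (root_line (fst (balanced_cut S)))"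
  shows "sound n I \<alpha> (search_step falsified S) \<and> root_false \<alpha> (search_step falsified S)"
proof (cases "leaves S \<le> 1")
  case False
  then have "leaves S \<ge> 2" by simp
  have "fst (balanced_cut S) \<noteq> PHole" using balanced_cut_props(1)[OF \<open>leaves S \<ge> 2\<close>] by auto
  then show ?thesis
    using balanced_cut_props(4,5)[OF \<open>leaves S \<ge> 2\<close>, of n I \<alpha>] answer[OF \<open>leaves S \<ge> 2\<close>] assms(1,2) False
    by (auto simp: search_step_def root_false_def)
qed (use assms in \<open>simp add: search_step_def\<close>)

lemma search_step_leaves: "leaves S \<ge> 2 \<Longrightarrow> 3 * leaves (search_step falsified S) \<le> 2 * leaves S"
  using balanced_cut_props(1-3)[of S] by (auto simp: search_step_def)

text \<open>Each step removes at least a third of the leaves, so 2K steps, as 8^K < 9^K, bring fewer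
  than 2^K leaves down to one.\<close>
lemma leaves_foldl_le_1:
  assumes stay: "\<And>S r. leaves S \<le> 1 \<Longrightarrow> f S r = S"
    and dec: "\<And>S r. leaves S \<ge> 2 \<Longrightarrow> 3 * leaves (f S r) \<le> 2 * leaves S"
    and "leaves S < 2 ^ K" "length rs = 2 * K"
  shows "leaves (foldl f S rs) \<le> 1"
proof -
  have decay: "leaves (foldl f S rs) \<le> 1 \<or> 3 ^ length rs * leaves (foldl f S rs) \<le> 2 ^ length rs * leaves S"
    for S rs
  proof (induction rs arbitrary: S)
    case (Cons r rs)
    show ?case
    proof (cases "leaves S \<le> 1")
      case True
      then have "foldl f S (r # rs) = S" by (induction rs) (simp_all add: stay)
      then show ?thesis using True by simp
    next
      case False
      then have d: "3 * leaves (f S r) \<le> 2 * leaves S" using dec by simp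
      from Cons.IH[of "f S r"] show ?thesis
      proof
        assume IH: "3 ^ length rs * leaves (foldl f (f S r) rs) \<le> 2 ^ length rs * leaves (f S r)"
        have "3 ^ length (r # rs) * leaves (foldl f S (r # rs))
            = 3 * (3 ^ length rs * leaves (foldl f (f S r) rs))" by simp
        also have "\<dots> \<le> 2 ^ length rs * (3 * leaves (f S r))" using IH by simp
        also have "\<dots> \<le> 2 ^ length (r # rs) * leaves S" using d by simp
        finally show ?thesis by simp
      qed simp
    qed
  qed simp
  show ?thesis
  proof (rule ccontr)
    assume many: "\<not> leaves (foldl f S rs) \<le> 1"
    then have "3 ^ (2 * K) * 2 \<le> 3 ^ (2 * K) * leaves (foldl f S rs)" by simp
    also have "\<dots> \<le> 2 ^ (2 * K) * leaves S"
      using decay[of S rs] many \<open>length rs = 2 * K\<close> by simp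
    also have "\<dots> < 2 ^ (2 * K) * 2 ^ K" using \<open>leaves S < 2 ^ K\<close> by simp
    also have "\<dots> = 2 ^ (3 * K)" by (simp add: power_add[symmetric])
    also have "\<dots> = 8 ^ K" by (simp add: power_mult)
    also have "\<dots> \<le> 9 ^ K" by (rule power_mono) auto
    also have "\<dots> = 3 ^ (2 * K)" by (simp add: power_mult)
    finally show False by simp
  qed
qed

definition prot_falsified ::
  "nat \<Rightarrow> nat set \<Rightarrow> nat \<Rightarrow> nat \<Rightarrow> ineq \<Rightarrow> (bool list \<Rightarrow> bool) list list \<Rightarrow> (nat \<Rightarrow> bool, nat \<Rightarrow> bool, bool) protocol" where
  "prot_falsified n P1 H T l rss = prot_lex_greater (Suc n) H T (alice_key n P1 l) (bob_key n P1 l) rss"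

definition prot_search_step :: "nat \<Rightarrow> nat set \<Rightarrow> nat \<Rightarrow> nat \<Rightarrow> ptree \<Rightarrow>
    (bool list \<Rightarrow> bool) list list \<Rightarrow> (nat \<Rightarrow> bool, nat \<Rightarrow> bool, ptree) protocol" where
  "prot_search_step n P1 H T S rss = (if leaves S \<le> 1 then PLeaf S else
     prot_bind (prot_falsified n P1 H T (root_line (fst (balanced_cut S))) rss)
       (\<lambda>b. PLeaf (if b then fst (balanced_cut S) else snd (balanced_cut S))))"

definition prot_kw :: "nat \<Rightarrow> nat set \<Rightarrow> nat \<Rightarrow> nat \<Rightarrow> nat \<Rightarrow> ptree \<Rightarrow>
    (bool list \<Rightarrow> bool) list list list \<Rightarrow> (nat \<Rightarrow> bool, nat \<Rightarrow> bool, ineq) protocol" where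
  "prot_kw n P1 H T Q S rsss =
     prot_bind (prot_iterate (prot_search_step n P1 H T) S (take Q rsss)) (\<lambda>S. PLeaf (leaf_axiom S))"

lemma prot_run_search_step:
  "prot_run (prot_search_step n P1 H T S rss) x y
     = search_step (\<lambda>l. prot_run (prot_falsified n P1 H T l rss) x y) S"
  by (simp add: prot_search_step_def search_step_def prot_run_bind)

lemma prot_cost_search_step: "prot_cost (prot_search_step n P1 H T S rss) \<le> 36 * T + 1"
proof -
  have "prot_cost (prot_bind (prot_falsified n P1 H T l rss) f) \<le> 36 * T + 1 + 0"
    if "\<And>b. prot_cost (f b) = 0" for l and f :: "bool \<Rightarrow> (nat \<Rightarrow> bool, nat \<Rightarrow> bool, ptree) protocol"
    unfolding prot_falsified_def by (intro prot_cost_bind_le prot_cost_lex_greater) (simp add: that)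
  then show ?thesis by (simp add: prot_search_step_def)
qed

lemma prot_cost_kw: "prot_cost (prot_kw n P1 H T Q S rsss) \<le> Q * (36 * T + 1)"
proof -
  have "prot_cost (prot_kw n P1 H T Q S rsss) \<le> length (take Q rsss) * (36 * T + 1) + 0"
    unfolding prot_kw_def by (intro prot_cost_bind_le prot_cost_iterate_le prot_cost_search_step) simp
  then have "prot_cost (prot_kw n P1 H T Q S rsss) \<le> length (take Q rsss) * (36 * T + 1)"
    by simp
  also have "\<dots> \<le> Q * (36 * T + 1)" by (rule mult_le_mono1) simp
  finally show ?thesis .
qed

lemma prot_falsified_error:
  assumes "Suc n < 2 ^ H"
  shows "measure_pmf.prob (replicate_pmf (3 * H + 3 * r) (replicate_pmf 6 (random_pred (Suc n))))
    {rss. prot_run (prot_falsified n P1 H (3 * H + 3 * r) l rss) x y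
      \<noteq> lex_greater (alice_key n P1 l x) (bob_key n P1 l y)} \<le> (1/2) ^ r"
  unfolding prot_falsified_def
  by (rule prot_lex_greater_error) (simp_all add: alice_key_def bob_key_def assms)

lemma prot_kw_solves:
  assumes wf: "wf_system n I" and P1: "P1 \<subseteq> {..<n}" and der: "cp_derives I T l" and "false_line l"
    and H: "Suc n < 2 ^ H" and K: "cp_size T < 2 ^ K" and r: "real (2 * K) * (1/2) ^ r \<le> 1/3"
  shows "kw_rand_solves n I P1 (map_pmf (prot_kw n P1 H (3 * H + 3 * r) (2 * K) (ptree_of T))
    (replicate_pmf (2 * K) (replicate_pmf (3 * H + 3 * r) (replicate_pmf 6 (random_pred (Suc n))))))"
  unfolding kw_rand_solves_def
proof (intro allI)
  fix \<alpha> :: "nat \<Rightarrow> bool"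
  let ?T = "3 * H + 3 * r" and ?S = "ptree_of T"
  let ?kw = "prot_kw n P1 H ?T (2 * K) ?S"
  define M where "M = replicate_pmf (2 * K) (replicate_pmf ?T (replicate_pmf 6 (random_pred (Suc n))))"
  define x where "x = restrict_to P1 \<alpha>"
  define y where "y = restrict_to ({..<n} - P1) \<alpha>"
  define f where "f = (\<lambda>S rss. prot_run (prot_search_step n P1 H ?T S rss) x y)"
  define bad where "bad S rss \<longleftrightarrow> 2 \<le> leaves S \<and>
    prot_run (prot_falsified n P1 H ?T (root_line (fst (balanced_cut S))) rss) x y
      \<noteq> lex_greater (alice_key n P1 (root_line (fst (balanced_cut S))) x) (bob_key n P1 (root_line (fst (balanced_cut S))) y)"
    for S rss
  define Inv where "Inv S \<longleftrightarrow> sound n I \<alpha> S \<and> root_false \<alpha> S" for S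
  have bad_prob: "measure_pmf.prob (replicate_pmf ?T (replicate_pmf 6 (random_pred (Suc n)))) {rss. bad S rss}
      \<le> (1/2) ^ r" for S
    by (rule order_trans[OF measure_pmf.finite_measure_mono prot_falsified_error[OF H]])
      (auto simp: bad_def)
  have step: "Inv (f S rss)" if "Inv S" "\<not> bad S rss" for S rss
    unfolding f_def prot_run_search_step Inv_def
  proof (rule search_step_sound)
    assume "leaves S \<ge> 2"
    then have "sound n I \<alpha> (fst (balanced_cut S))" "fst (balanced_cut S) \<noteq> PHole"
      using balanced_cut_props(1)[of S] balanced_cut_props(4)[of S n I \<alpha>] \<open>Inv S\<close> by (auto simp: Inv_def)
    then have "length (fst (root_line (fst (balanced_cut S)))) = n" by (rule sound_root_line_length)
    then show "prot_run (prot_falsified n P1 H ?T (root_line (fst (balanced_cut S))) rss) x y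
        \<longleftrightarrow> \<not> sat_ineq \<alpha> (root_line (fst (balanced_cut S)))"
      using \<open>\<not> bad S rss\<close> \<open>leaves S \<ge> 2\<close> not_sat_iff_lex_greater_keys[OF P1]
      by (simp add: bad_def x_def y_def)
  qed (use \<open>Inv S\<close> in \<open>simp_all add: Inv_def\<close>)
  have start: "Inv ?S"
    using sound_ptree_of[OF der wf] false_line_not_sat[OF \<open>false_line l\<close>] ptree_of_not_hole
      cp_derives_root[OF der] by (simp add: Inv_def root_false_def root_line_ptree_of)
  have found: "leaf_axiom (foldl f ?S rsss) \<in> I \<and> \<not> sat_ineq \<alpha> (leaf_axiom (foldl f ?S rsss))"
    if "bad_steps f bad ?S rsss = 0" "length rsss = 2 * K" for rsss
  proof -
    have "Inv (foldl f ?S rsss)" by (rule invariant_foldl[where bad=bad]) (use step start that in auto)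
    moreover have "leaves (foldl f ?S rsss) \<le> 1"
    proof (rule leaves_foldl_le_1)
      show "f S r = S" if "leaves S \<le> 1" for S r
        using that by (simp add: f_def prot_run_search_step search_step_def)
      show "3 * leaves (f S r) \<le> 2 * leaves S" if "leaves S \<ge> 2" for S r
        unfolding f_def prot_run_search_step using that by (rule search_step_leaves)
      show "leaves ?S < 2 ^ K" using leaves_ptree_of[of T] K by linarith
    qed (rule that(2))
    ultimately show ?thesis using leaf_axiom_falsified by (auto simp: Inv_def)
  qed
  define G where "G = {p. let l = prot_run p x y in l \<in> I \<and> \<not> sat_ineq \<alpha> l}"
  have "measure_pmf.prob M (- (?kw -` G)) \<le> measure_pmf.prob M {rsss. 1 \<le> bad_steps f bad ?S rsss}"
  proof (rule measure_pmf_mono_on_support)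
    fix rsss assume "rsss \<in> set_pmf M" "rsss \<in> - (?kw -` G)"
    moreover have "length rsss = 2 * K" using \<open>rsss \<in> set_pmf M\<close> by (simp add: M_def length_in_replicate_pmf)
    ultimately show "rsss \<in> {rsss. 1 \<le> bad_steps f bad ?S rsss}"
      using found[of rsss] by (auto simp: G_def prot_kw_def prot_run_bind prot_run_iterate f_def[symmetric] Let_def Suc_le_eq)
  qed
  also have "\<dots> \<le> real (2 * K choose 1) * ((1/2) ^ r) ^ 1"
    unfolding M_def by (rule prob_bad_steps_ge) (use bad_prob in auto)
  also have "\<dots> \<le> 1/3" using r by simp
  finally have "measure_pmf.prob M (- (?kw -` G)) \<le> 1/3" .
  then have "2/3 \<le> measure_pmf.prob M (?kw -` G)"
    using measure_pmf.prob_compl[of "?kw -` G" M] by (simp add: Compl_eq_Diff_UNIV)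
  then show "2/3 \<le> measure_pmf.prob (map_pmf ?kw
      (replicate_pmf (2 * K) (replicate_pmf ?T (replicate_pmf 6 (random_pred (Suc n))))))
    {p. let l = prot_run p (restrict_to P1 \<alpha>) (restrict_to ({..<n} - P1) \<alpha>) in l \<in> I \<and> \<not> sat_ineq \<alpha> l}"
    by (simp add: M_def G_def x_def y_def)
qed

section \<open>Bounds on the randomized communication\<close>

lemma kw_rand_bits_le_num_vars:
  assumes wf: "wf_system n I" and no: "no_01_solution I" and req: "kw_requires_rand_bits n I P1 t"
  shows "t \<le> n"
proof -
  define p where "p = prot_bind (prot_reveal P1 n (\<lambda>_. False)) (\<lambda>\<beta>. PLeaf (SOME l. l \<in> I \<and> \<not> sat_ineq \<beta> l))"
  have "kw_rand_solves n I P1 (return_pmf p)"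
    unfolding kw_rand_solves_def
  proof (intro allI)
    fix \<alpha> :: "nat \<Rightarrow> bool"
    define \<beta> where "\<beta> = prot_run (prot_reveal P1 n (\<lambda>_. False)) (restrict_to P1 \<alpha>) (restrict_to ({..<n} - P1) \<alpha>)"
    have agree: "\<beta> i = \<alpha> i" if "i < n" for i using that by (simp add: \<beta>_def prot_run_reveal restrict_to_def)
    define l where "l = (SOME l. l \<in> I \<and> \<not> sat_ineq \<beta> l)"
    have "\<exists>l. l \<in> I \<and> \<not> sat_ineq \<beta> l" using no unfolding no_01_solution_def by blast
    then have l: "l \<in> I \<and> \<not> sat_ineq \<beta> l" unfolding l_def by (rule someI_ex)
    moreover have "length (fst l) = n" using l wf by (simp add: wf_system_def)
    then have "sat_ineq \<beta> l = sat_ineq \<alpha> l"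
      unfolding sat_ineq_def using lhs_val_cong[of "fst l" \<beta> \<alpha>] agree by simp
    ultimately show "2/3 \<le> measure_pmf.prob (return_pmf p)
      {p. let l = prot_run p (restrict_to P1 \<alpha>) (restrict_to ({..<n} - P1) \<alpha>) in l \<in> I \<and> \<not> sat_ineq \<alpha> l}"
      by (simp add: p_def prot_run_bind \<beta>_def[symmetric] l_def[symmetric] Let_def)
  qed
  moreover have "prot_cost p \<le> n + 0"
    unfolding p_def by (intro prot_cost_bind_le prot_cost_reveal) simp
  ultimately show ?thesis using req unfolding kw_requires_rand_bits_def by auto
qed

lemma cp_size_neq_0 [simp]: "cp_size T \<noteq> 0"
  by (cases T) auto

lemma kw_rand_bits_zero_if_refuted_by_axiom:
  assumes "treelike_cp_refutation I T" "cp_size T = 1" and req: "kw_requires_rand_bits n I P1 t"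
  shows "t = 0"
proof -
  obtain l where der: "cp_derives I T l" and "false_line l"
    using assms(1) unfolding treelike_cp_refutation_def by blast
  moreover obtain l' where "T = CP_Ax l'" using assms(2) by (cases T) auto
  ultimately have "l \<in> I" "\<And>\<alpha>. \<not> sat_ineq \<alpha> l"
    using false_line_not_sat by (auto elim: cp_derives.cases)
  then have "kw_rand_solves n I P1 (return_pmf (PLeaf l))"
    unfolding kw_rand_solves_def by (simp add: Let_def)
  then show ?thesis using req unfolding kw_requires_rand_bits_def by force
qed

lemma kw_rand_bits_le_protocol_cost:
  assumes wf: "wf_system n I" and P1: "P1 \<subseteq> {..<n}" and req: "kw_requires_rand_bits n I P1 t"
    and "treelike_cp_refutation I T"
    and H: "Suc n < 2 ^ H" and K: "cp_size T < 2 ^ K" and r: "real (2 * K) * (1/2) ^ r \<le> 1/3"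
  shows "t \<le> 2 * K * (36 * (3 * H + 3 * r) + 1)"
proof -
  obtain l where der: "cp_derives I T l" and fl: "false_line l"
    using assms(4) unfolding treelike_cp_refutation_def by blast
  let ?R = "map_pmf (prot_kw n P1 H (3 * H + 3 * r) (2 * K) (ptree_of T))
    (replicate_pmf (2 * K) (replicate_pmf (3 * H + 3 * r) (replicate_pmf 6 (random_pred (Suc n)))))"
  have "kw_rand_solves n I P1 ?R" by (rule prot_kw_solves[OF wf P1 der fl H K r])
  moreover have "\<forall>p\<in>set_pmf ?R. prot_cost p \<le> 2 * K * (36 * (3 * H + 3 * r) + 1)"
    using prot_cost_kw[of n P1 H "3 * H + 3 * r" "2 * K" "ptree_of T"] by (simp del: mult_Suc_right)
  ultimately show ?thesis using req unfolding kw_requires_rand_bits_def by blast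
qed

lemma floor_log_le_log: "m > 0 \<Longrightarrow> real (floor_log m) \<le> log 2 (real m)"
proof -
  assume "m > 0"
  then have "(2::real) ^ floor_log m \<le> real m"
    using floor_log_exp2_le by (metis of_nat_le_iff of_nat_numeral of_nat_power)
  then have "log 2 ((2::real) ^ floor_log m) \<le> log 2 (real m)"
    by (intro log_mono) auto
  then show ?thesis by (simp add: log_nat_power)
qed

text \<open>The parameters: H bits address the n + 2 possible lengths of a common prefix of the keys,
  2K rounds remove the fewer than 2^K leaves, and error 2^-r per round survives the union bound
  over the 2K rounds.\<close>
lemma kw_rand_bits_le_log_size:
  assumes wf: "wf_system n I" and P1: "P1 \<subseteq> {..<n}" and req: "kw_requires_rand_bits n I P1 t"
    and ref: "treelike_cp_refutation I T" and "n \<ge> 2" and s: "2 \<le> cp_size T" "cp_size T < 2 ^ n"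
  shows "real t \<le> 5000 * log 2 (real (cp_size T)) * log 2 (real n)"
proof -
  define H where "H = floor_log (Suc n) + 1"
  define K where "K = floor_log (cp_size T) + 1"
  define r where "r = floor_log (6 * K) + 1"
  define L where "L = log 2 (real n)"
  define ls where "ls = log 2 (real (cp_size T))"
  have L1: "L \<ge> 1" and ls1: "ls \<ge> 1" using \<open>n \<ge> 2\<close> s by (simp_all add: L_def ls_def)
  have "6 * K < 2 ^ r" using floor_log_exp2_gt[of "6 * K"] by (simp add: r_def)
  then have "real (6 * K) \<le> 2 ^ r" by (metis less_imp_le of_nat_le_iff of_nat_numeral of_nat_power)
  then have r: "real (2 * K) * (1/2) ^ r \<le> 1/3" by (simp add: power_one_over field_simps)
  have "t \<le> 2 * K * (36 * (3 * H + 3 * r) + 1)"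
    using floor_log_exp2_gt[of "Suc n"] floor_log_exp2_gt[of "cp_size T"]
    by (intro kw_rand_bits_le_protocol_cost[OF wf P1 req ref _ _ r]) (simp_all add: H_def K_def)
  have "real (cp_size T) < 2 ^ n" using s by (metis of_nat_less_iff of_nat_numeral of_nat_power)
  then have "ls < log 2 (2 ^ n)" unfolding ls_def using s by (intro log_less) auto
  then have "ls < n" by (simp add: log_nat_power)
  have "real (floor_log (cp_size T)) \<le> ls" using floor_log_le_log[of "cp_size T"] s by (simp add: ls_def)
  then have K: "real K \<le> 2 * ls" using ls1 by (simp add: K_def)
  have H: "real H \<le> 3 * L"
  proof -
    have "real (floor_log (Suc n)) \<le> log 2 (real (Suc n))" by (rule floor_log_le_log) simp
    also have "\<dots> \<le> log 2 (2 * real n)" using \<open>n \<ge> 2\<close> by (intro log_mono) auto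
    also have "\<dots> = 1 + L" using \<open>n \<ge> 2\<close> by (simp add: log_mult L_def)
    finally show ?thesis using L1 by (simp add: H_def)
  qed
  have "real r \<le> 6 * L"
  proof -
    have "real (floor_log (6 * K)) \<le> log 2 (real (6 * K))" by (rule floor_log_le_log) (simp add: K_def)
    also have "\<dots> \<le> log 2 (16 * real n)" using K \<open>ls < n\<close> by (intro log_mono) (auto simp: K_def)
    also have "\<dots> = 4 + L"
    proof -
      have "log 2 (16::real) = 4" using log_pow_cancel[of "2::real" 4] by simp
      then show ?thesis using \<open>n \<ge> 2\<close> by (simp add: log_mult L_def)
    qed
    finally show ?thesis using L1 by (simp add: r_def)
  qed
  then have rounds: "36 * real (3 * H + 3 * r) + 1 \<le> 973 * L" using H L1 by simp
  have "real t \<le> real (2 * K * (36 * (3 * H + 3 * r) + 1))"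
    using \<open>t \<le> _\<close> by (simp only: of_nat_le_iff)
  also have "\<dots> = real (2 * K) * (36 * real (3 * H + 3 * r) + 1)" by (simp add: algebra_simps)
  also have "\<dots> \<le> (4 * ls) * (973 * L)" using K rounds by (intro mult_mono) auto
  also have "\<dots> \<le> 5000 * ls * L" using ls1 L1 by (simp add: mult_right_mono)
  finally show ?thesis by (simp add: ls_def L_def)
qed

lemma kw_rand_bits_le_log_size_log_vars:
  assumes "n \<ge> 2" and wf: "wf_system n I" and no: "no_01_solution I" and P1: "P1 \<subseteq> {..<n}"
    and req: "kw_requires_rand_bits n I P1 t" and ref: "treelike_cp_refutation I T"
  shows "real t \<le> 5000 * log 2 (real (cp_size T)) * log 2 (real n)"
proof -
  have L1: "log 2 (real n) \<ge> 1" using \<open>n \<ge> 2\<close> by simp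
  consider "cp_size T = 1" | "2 \<le> cp_size T" "cp_size T < 2 ^ n" | "2 ^ n \<le> cp_size T"
    using cp_size_neq_0[of T] by linarith
  then show ?thesis
  proof cases
    case 1
    then show ?thesis using kw_rand_bits_zero_if_refuted_by_axiom[OF ref _ req] by simp
  next
    case 2
    then show ?thesis using kw_rand_bits_le_log_size[OF wf P1 req ref \<open>n \<ge> 2\<close>] by simp
  next
    case 3
    then have "(2::real) ^ n \<le> real (cp_size T)" by (metis of_nat_le_iff of_nat_numeral of_nat_power)
    then have "log 2 (2 ^ n) \<le> log 2 (real (cp_size T))" by (intro log_mono) auto
    then have "real n \<le> log 2 (real (cp_size T))" by (simp add: log_nat_power)
    moreover have "real t \<le> real n" using kw_rand_bits_le_num_vars[OF wf no req] by simp
    moreover have "1 * log 2 (real (cp_size T)) * 1 \<le> 5000 * log 2 (real (cp_size T)) * log 2 (real n)"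
      using calculation(1) L1 by (intro mult_mono) auto
    ultimately show ?thesis by linarith
  qed
qed

theorem theorem1:
  "\<exists>c::real. c > 0 \<and>
     (\<forall>(n::nat) (I::ineq set) (P1::nat set) (t::nat) (T::cp_tree).
        n \<ge> 2 \<longrightarrow> wf_system n I \<longrightarrow> no_01_solution I \<longrightarrow> P1 \<subseteq> {..<n} \<longrightarrow>
        kw_requires_rand_bits n I P1 t \<longrightarrow> treelike_cp_refutation I T \<longrightarrow>
        real (cp_size T) \<ge> 2 powr (c * real t / log 2 (real n)))"
proof (intro exI[where x="1/5000"] conjI allI impI)
  fix n :: nat and I P1 t T
  assume "n \<ge> 2" "wf_system n I" "no_01_solution I" "P1 \<subseteq> {..<n}"
    "kw_requires_rand_bits n I P1 t" "treelike_cp_refutation I T"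
  then have "real t \<le> 5000 * log 2 (real (cp_size T)) * log 2 (real n)"
    by (rule kw_rand_bits_le_log_size_log_vars)
  moreover have "log 2 (real n) > 0" using \<open>n \<ge> 2\<close> by simp
  ultimately have "1/5000 * real t / log 2 (real n) \<le> log 2 (real (cp_size T))"
    by (simp add: pos_divide_le_eq)
  then have "2 powr (1/5000 * real t / log 2 (real n)) \<le> 2 powr log 2 (real (cp_size T))"
    by (rule powr_mono) simp
  also have "\<dots> = real (cp_size T)" by (intro powr_log_cancel) (auto intro: gr0I)
  finally show "2 powr (1/5000 * real t / log 2 (real n)) \<le> real (cp_size T)" .
qed simp

end
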